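(* Let $(V,c)$ be a network satisfying the Yang-type inequality with constant $C_{YT}$. Let $\Omega\subset V$ be finite with Dirichlet eigenvalues $\lambda_1\le\cdots\le\lambda_{|\Omega|}$, and let $1\le k<|\Omega|$. If $\lambda_k\le1-\delta$ for some $\delta>0$, then $$\lambda_{k+1}-\lambda_{\min}\le(1+\theta)\,k^{\theta/2}(\lambda_1-\lambda_{\min}),\qquad\text{where }\theta=\frac{C_{YT}}{\delta}.$$
   Context: A network is a pair $(V,c)$ with $V$ countable and $c:V\times V\to[0,\infty)$ symmetric with $\pi(x)=\sum_yc(x,y)<\infty$; $P(x,y)=c(x,y)/\pi(x)$ and $\Delta f(x)=\sum_yP(x,y)(f(x)-f(y))$, a bounded self-adjoint operator on $L^2(V,\pi)$ (inner product $\sum_x\pi(x)f(x)\overline{g(x)}$) with spectrum in $[0,2]$; $\lambda_{\min}$ is the bottom of its spectrum. For finite $\Omega\subset V$, the Dirichlet eigenvalues $\lambda_1\le\cdots\le\lambda_{|\Omega|}$ of $\Omega$ are the eigenvalues (with multiplicity) of the compression $\Delta_\Omega f=\mathbf 1_\Omega\cdot\Delta f$ on functions vanishing outside $\Omega$. The network satisfies the Yang-type inequality with constant $C_{YT}$ if for every finite $\Omega\subset V$ and every $k<|\Omega|$: $\sum_{i=1}^k(\lambda_{k+1}-\lambda_i)^2(1-\lambda_i)\le C_{YT}\sum_{i=1}^k(\lambda_{k+1}-\lambda_i)(\lambda_i-\lambda_{\min})$. *)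

theory Defs
  imports "HOL-Analysis.Analysis" "Jordan_Normal_Form.Char_Poly"
begin

text \<open>The vertex set V is the (countable) type 'a; c is the conductance.\<close>

definition pi_w :: "('a \<Rightarrow> 'a \<Rightarrow> real) \<Rightarrow> 'a \<Rightarrow> real" where
  "pi_w c x = infsum (c x) UNIV"

definition network :: "('a::countable \<Rightarrow> 'a \<Rightarrow> real) \<Rightarrow> bool" where
  "network c \<longleftrightarrow> (\<forall>x y. 0 \<le> c x y) \<and> (\<forall>x y. c x y = c y x)
     \<and> (\<forall>x. c x summable_on UNIV) \<and> (\<forall>x. 0 < pi_w c x)"

definition trans_P :: "('a \<Rightarrow> 'a \<Rightarrow> real) \<Rightarrow> 'a \<Rightarrow> 'a \<Rightarrow> real" where
  "trans_P c x y = c x y / pi_w c x"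

definition lap :: "('a \<Rightarrow> 'a \<Rightarrow> real) \<Rightarrow> ('a \<Rightarrow> complex) \<Rightarrow> 'a \<Rightarrow> complex" where
  "lap c f x = infsum (\<lambda>y. complex_of_real (trans_P c x y) * (f x - f y)) UNIV"

definition l2 :: "('a \<Rightarrow> 'a \<Rightarrow> real) \<Rightarrow> ('a \<Rightarrow> complex) set" where
  "l2 c = {f. (\<lambda>x. pi_w c x * (cmod (f x))\<^sup>2) summable_on UNIV}"

definition l2norm :: "('a \<Rightarrow> 'a \<Rightarrow> real) \<Rightarrow> ('a \<Rightarrow> complex) \<Rightarrow> real" where
  "l2norm c f = sqrt (infsum (\<lambda>x. pi_w c x * (cmod (f x))\<^sup>2) UNIV)"

text \<open>Resolvent set: z such that (Delta - z) has a bounded two-sided inverse on L2.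
  (Since pi > 0 everywhere, equality in L2 is pointwise equality.)\<close>
definition resolvent_set :: "('a \<Rightarrow> 'a \<Rightarrow> real) \<Rightarrow> complex set" where
  "resolvent_set c = {z. \<exists>S. (\<forall>f\<in>l2 c. S f \<in> l2 c)
      \<and> (\<exists>B. \<forall>f\<in>l2 c. l2norm c (S f) \<le> B * l2norm c f)
      \<and> (\<forall>f\<in>l2 c. S (\<lambda>x. lap c f x - z * f x) = f)
      \<and> (\<forall>f\<in>l2 c. (\<lambda>x. lap c (S f) x - z * S f x) = f)}"

definition lap_spectrum :: "('a \<Rightarrow> 'a \<Rightarrow> real) \<Rightarrow> complex set" where
  "lap_spectrum c = - resolvent_set c"

text \<open>Bottom of the spectrum (the spectrum is a subset of the reals).\<close>
definition lambda_min :: "('a \<Rightarrow> 'a \<Rightarrow> real) \<Rightarrow> real" where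
  "lambda_min c = Inf {t::real. complex_of_real t \<in> lap_spectrum c}"

text \<open>lam 1 <= ... <= lam |Omega| are the eigenvalues with multiplicity of the compression
  Delta_Omega, whose matrix w.r.t. an enumeration e of Omega has entries
  delta_xy - P(x,y): its characteristic polynomial equals prod (X - lam i).\<close>
definition dirichlet_eigenvalues ::
  "('a \<Rightarrow> 'a \<Rightarrow> real) \<Rightarrow> 'a set \<Rightarrow> (nat \<Rightarrow> real) \<Rightarrow> bool" where
  "dirichlet_eigenvalues c \<Omega> lam \<longleftrightarrow>
     (\<forall>i j. 1 \<le> i \<longrightarrow> i \<le> j \<longrightarrow> j \<le> card \<Omega> \<longrightarrow> lam i \<le> lam j) \<and>
     (\<exists>e. bij_betw e {0..<card \<Omega>} \<Omega> \<and>
        char_poly (mat (card \<Omega>) (card \<Omega>)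
           (\<lambda>(i,j). (if i = j then 1 else 0) - trans_P c (e i) (e j)))
        = (\<Prod>i\<in>{1..card \<Omega>}. [:- lam i, 1:]))"

definition yang_type :: "('a::countable \<Rightarrow> 'a \<Rightarrow> real) \<Rightarrow> real \<Rightarrow> bool" where
  "yang_type c C \<longleftrightarrow> (\<forall>\<Omega> lam k. finite \<Omega> \<longrightarrow> dirichlet_eigenvalues c \<Omega> lam \<longrightarrow> k < card \<Omega> \<longrightarrow>
      (\<Sum>i=1..k. (lam (k+1) - lam i)\<^sup>2 * (1 - lam i))
        \<le> C * (\<Sum>i=1..k. (lam (k+1) - lam i) * (lam i - lambda_min c)))"

end

theory Submission
  imports Defs
begin

(*
  Write mu i = lam i - lambda_min c and theta = C / delta. Since lam i <= lam k <= 1 - delta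
  for i <= k, the Yang-type inequality gives, for every j <= k,
    sum_{i <= j} (mu (j+1) - mu i)^2 <= theta * sum_{i <= j} (mu (j+1) - mu i) * mu i,
  and Cheng and Yang's recursion turns these inequalities into the claimed bound on mu (k+1),
  provided theta >= 0 and mu 1 >= 0.

  For mu 1 >= 0: the infimum m of the Rayleigh quotients of the Laplacian on L^2(pi) lies in
  the spectrum (near-minimisers are approximate eigenfunctions), no negative number does (the
  Neumann series of the transition operator inverts the Laplacian minus t for t < 0), and a
  Dirichlet eigenfunction extended by zero has Rayleigh quotient lam 1. Hence
  0 <= lambda_min c <= m <= lam 1.

  If C < 0, the Yang-type inequality on two-point sets rules out edges between distinct
  vertices; then all Dirichlet eigenvalues and lambda_min c vanish.
*)

section \<open>The Cheng--Yang recursion\<close>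

lemma mult_sinh_le_sinh_mult:
  fixes b y :: real
  assumes "1 \<le> b" and "0 \<le> y"
  shows "b * sinh y \<le> sinh (b * y)"
proof -
  have "sinh (b * 0) - b * sinh 0 \<le> sinh (b * y) - b * sinh y"
  proof (rule DERIV_nonneg_imp_nondecreasing[OF \<open>0 \<le> y\<close>])
    fix z :: real assume "0 \<le> z" "z \<le> y"
    then have "cosh z \<le> cosh (b * z)"
      using assms by (simp add: cosh_real_nonneg_le_iff mult_le_cancel_right1)
    then have "0 \<le> b * cosh (b * z) - b * cosh z"
      using assms by (simp add: right_diff_distrib[symmetric])
    moreover have "((\<lambda>z. sinh (b * z) - b * sinh z) has_real_derivative
        b * cosh (b * z) - b * cosh z) (at z)"
      by (auto intro!: derivative_eq_intros)
    ultimately show "\<exists>d. ((\<lambda>z. sinh (b * z) - b * sinh z) has_real_derivative d) (at z) \<and> 0 \<le> d"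
      by blast
  qed
  then show ?thesis by simp
qed

lemma cheng_yang_ratio_ineq:
  fixes j p :: real
  assumes "0 < j" and "0 \<le> p"
  shows "(1 + p) * (1 + 1/j) powr (p/2) \<le> (j + 1) * (1 + 1/j) powr p - j"
proof -
  define u where "u = 1 + 1/j"
  define y where "y = ln u / 2"
  have "u > 0" using assms unfolding u_def by (simp add: add_pos_nonneg)
  then have u_powr: "u powr s = exp (2 * s * y)" for s
    unfolding y_def by (simp add: powr_def)
  have "u = exp (2 * y)" using u_powr[of 1] \<open>u > 0\<close> by simp
  \<comment> \<open>Both sides become multiples of \<open>exp ((1 + p) * y)\<close>; what remains is
    \<open>(1 + p) * sinh y \<le> sinh ((1 + p) * y)\<close>.\<close>
  have "(1 + p) * u powr (p/2) * (u - 1) = 2 * exp ((1 + p) * y) * ((1 + p) * sinh y)"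
    unfolding u_powr sinh_field_def using \<open>u = exp (2 * y)\<close>
    by (simp add: algebra_simps exp_add[symmetric])
  also have "\<dots> \<le> 2 * exp ((1 + p) * y) * sinh ((1 + p) * y)"
    using mult_sinh_le_sinh_mult[of "1 + p" y] assms \<open>u > 0\<close>
    by (simp add: y_def u_def)
  also have "\<dots> = u * u powr p - 1"
    unfolding u_powr sinh_field_def using \<open>u = exp (2 * y)\<close>
    by (simp add: field_simps exp_add[symmetric])
  finally have "j * ((1 + p) * u powr (p/2) * (u - 1)) \<le> j * (u * u powr p - 1)"
    using assms by simp
  then have "(1 + p) * u powr (p/2) * (j * (u - 1)) \<le> (j * u) * u powr p - j"
    by (simp add: algebra_simps)
  moreover have "j * (u - 1) = 1" "j * u = j + 1"
    using assms unfolding u_def by (simp_all add: field_simps)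
  ultimately show ?thesis
    unfolding u_def by simp
qed

lemma cheng_yang_quadratic_form_le:
  fixes j a \<sigma> x L :: real
  defines "b \<equiv> 1 + 2 * a"
  assumes "0 < j" and "0 \<le> a" and "0 \<le> \<sigma>" and disc: "b^2 * \<sigma> + b^2 * j * (j + 1) \<le> \<sigma>^2"
  shows "b * (- (j - a) * x^2 + 2 * (1 + a) * j * L * x - (1 + a) * j * L^2)
           \<le> \<sigma> * ((x - (1 + a) * L)^2 + a * (1 + a) * L^2)"
proof -
  define A where "A = \<sigma> + b * (j - a)"
  define B where "B = - 2 * (1 + a) * (\<sigma> + b * j)"
  define C where "C = (1 + a) * b * (\<sigma> + j)"
  have "b^2 \<le> \<sigma>"
  proof (rule ccontr)
    assume "\<not> b^2 \<le> \<sigma>"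
    then have "\<sigma>^2 \<le> b^2 * \<sigma>"
      using \<open>0 \<le> \<sigma>\<close> by (simp add: power2_eq_square mult_right_mono)
    moreover have "0 < b^2 * j * (j + 1)"
      using assms by (simp add: b_def)
    ultimately show False using disc by simp
  qed
  then have "b * (1 + a + j) \<le> A"
    unfolding A_def b_def by (simp add: algebra_simps power2_eq_square)
  then have "0 < A"
    using assms by (smt (verit) b_def mult_pos_pos)
  have "0 \<le> (A * x + B * L / 2)^2 + a * (1 + a) * (\<sigma>^2 - b^2 * \<sigma> - b^2 * j * (j + 1)) * L^2"
    using assms by simp
  also have "\<dots> = A * (A * x^2 + B * x * L + C * L^2)"
    unfolding A_def B_def C_def b_def by (simp add: algebra_simps power2_eq_square)
  finally have "0 \<le> A * x^2 + B * x * L + C * L^2"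
    using \<open>0 < A\<close> by (simp add: zero_le_mult_iff)
  also have "A * x^2 + B * x * L + C * L^2
      = \<sigma> * ((x - (1 + a) * L)^2 + a * (1 + a) * L^2)
        - b * (- (j - a) * x^2 + 2 * (1 + a) * j * L * x - (1 + a) * j * L^2)"
    unfolding A_def B_def C_def b_def by (simp add: algebra_simps power2_eq_square)
  finally show ?thesis by simp
qed

lemma cheng_yang_ratio_discriminant:
  fixes j a r :: real
  defines "b \<equiv> 1 + 2 * a" and "\<sigma> \<equiv> (j + 1) * ((j + 1) * r^2 - j)"
  assumes "0 < j" and "0 \<le> a" and "0 < r" and ratio: "b * r \<le> (j + 1) * r^2 - j"
  shows "0 \<le> \<sigma>" and "b^2 * \<sigma> + b^2 * j * (j + 1) \<le> \<sigma>^2"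
proof -
  define w where "w = (j + 1) * r^2 - j"
  have "b * r \<le> w" "0 \<le> b * r"
    using ratio assms unfolding b_def w_def by simp_all
  then show "0 \<le> \<sigma>"
    unfolding \<sigma>_def w_def[symmetric] using \<open>0 < j\<close> by simp
  have "(j + 1) * (b * r)^2 \<le> (j + 1) * w^2"
    using \<open>b * r \<le> w\<close> \<open>0 \<le> b * r\<close> \<open>0 < j\<close> by (intro mult_left_mono power_mono) auto
  also have "(j + 1) * (b * r)^2 = b^2 * (w + j)"
    unfolding w_def by (simp add: algebra_simps power2_eq_square)
  finally have "b^2 * w + b^2 * j \<le> (j + 1) * w^2"
    by (simp add: algebra_simps)
  then have "(j + 1) * (b^2 * w + b^2 * j) \<le> (j + 1) * ((j + 1) * w^2)"
    using \<open>0 < j\<close> by (intro mult_left_mono) auto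
  then show "b^2 * \<sigma> + b^2 * j * (j + 1) \<le> \<sigma>^2"
    unfolding \<sigma>_def w_def[symmetric] by (simp add: algebra_simps power2_eq_square)
qed

lemma cheng_yang_step:
  fixes j a r S Q x :: real
  assumes "0 < j" and "0 \<le> a" and "0 < r"
    and "(1 + 2 * a) * r \<le> (j + 1) * r^2 - j"
    and quad: "j * x^2 - (2 + 2 * a) * S * x + (1 + 2 * a) * Q \<le> 0"
  shows "j^2 * ((1 + a) * (S + x)^2 - (j + 1) * (Q + x^2))
           \<le> (j + 1)^2 * r^2 * ((1 + a) * S^2 - j * Q)"
proof -
  define b where "b = 1 + 2 * a"
  define \<sigma> where "\<sigma> = (j + 1) * ((j + 1) * r^2 - j)"
  define L where "L = S / j"
  define T where "T = Q / j"
  define F where "F = (1 + a) * L^2 - T"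
  define G where "G = (x - (1 + a) * L)^2 + a * (1 + a) * L^2"
  define h where "h = - (j - a) * x^2 + 2 * (1 + a) * j * L * x - (1 + a) * j * L^2"
  \<comment> \<open>In these variables \<open>quad\<close> says \<open>G \<le> b * F\<close> and the claim says \<open>h \<le> \<sigma> * F\<close>.\<close>
  note discriminant = cheng_yang_ratio_discriminant[OF assms(1-4), folded b_def \<sigma>_def]
  have form: "b * h \<le> \<sigma> * G"
    using cheng_yang_quadratic_form_le[of j a \<sigma> x L] assms discriminant
    unfolding b_def G_def h_def by simp
  have "S = j * L" "Q = j * T"
    using \<open>0 < j\<close> unfolding L_def T_def by simp_all
  then have "j * (x^2 - 2 * (1 + a) * L * x + (1 + 2 * a) * T) \<le> 0"
    using quad by (simp add: algebra_simps)
  then have "x^2 - 2 * (1 + a) * L * x + (1 + 2 * a) * T \<le> 0"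
    using \<open>0 < j\<close> by (simp add: mult_le_0_iff)
  then have "G \<le> b * F"
    unfolding G_def F_def b_def by (simp add: algebra_simps power2_eq_square)
  then have "b * h \<le> b * (\<sigma> * F)"
    using form discriminant(1) by (smt (verit) mult_left_mono mult.left_commute)
  then have "h \<le> \<sigma> * F"
    using assms unfolding b_def by simp
  then have "j * (j + 1) * F + h \<le> (j + 1)^2 * r^2 * F"
    unfolding \<sigma>_def by (simp add: algebra_simps power2_eq_square)
  then have "j^2 * (j * (j + 1) * F + h) \<le> j^2 * ((j + 1)^2 * r^2 * F)"
    by (rule mult_left_mono) simp
  moreover have "(1 + a) * (S + x)^2 - (j + 1) * (Q + x^2) = j * (j + 1) * F + h"
    "(1 + a) * S^2 - j * Q = j^2 * F"
    unfolding F_def h_def \<open>S = j * L\<close> \<open>Q = j * T\<close> by (simp_all add: algebra_simps power2_eq_square)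
  ultimately show ?thesis by (simp add: algebra_simps)
qed

lemma cheng_yang_final_step:
  fixes k a S Q x M :: real
  assumes "0 < k" and "0 < a" and "0 \<le> M"
    and quad: "k * x^2 - (2 + 2 * a) * S * x + (1 + 2 * a) * Q \<le> 0"
    and bound: "(1 + a) * S^2 - k * Q \<le> k^2 * a * M^2"
  shows "x \<le> (1 + 2 * a) * M"
proof -
  define L where "L = S / k"
  define T where "T = Q / k"
  have "S = k * L" "Q = k * T"
    using \<open>0 < k\<close> unfolding L_def T_def by simp_all
  then have "k * (x^2 - 2 * (1 + a) * L * x + (1 + 2 * a) * T) \<le> 0"
    using quad by (simp add: algebra_simps)
  then have quad': "x^2 - 2 * (1 + a) * L * x + (1 + 2 * a) * T \<le> 0"
    using \<open>0 < k\<close> by (simp add: mult_le_0_iff)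
  have "k^2 * ((1 + a) * L^2 - T) \<le> k^2 * (a * M^2)"
    using bound unfolding \<open>S = k * L\<close> \<open>Q = k * T\<close> by (simp add: algebra_simps power2_eq_square)
  then have "(1 + a) * L^2 - T \<le> a * M^2"
    using \<open>0 < k\<close> by simp
  then have "(1 + 2 * a) * ((1 + a) * L^2 - a * M^2) \<le> (1 + 2 * a) * T"
    using \<open>0 < a\<close> by (intro mult_left_mono) auto
  then have "x^2 - 2 * (1 + a) * L * x + (1 + a) * (1 + 2 * a) * L^2 \<le> (1 + 2 * a) * a * M^2"
    using quad' by (simp add: algebra_simps)
  moreover have "a * x^2 + (1 + a) * (x - (1 + 2 * a) * L)^2
      = (1 + 2 * a) * (x^2 - 2 * (1 + a) * L * x + (1 + a) * (1 + 2 * a) * L^2)"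
    by (simp add: algebra_simps power2_eq_square)
  ultimately have "a * x^2 \<le> (1 + 2 * a) * ((1 + 2 * a) * a * M^2)"
    using \<open>0 < a\<close> by (smt (verit) mult_left_mono zero_le_power2 mult_nonneg_nonneg)
  then have "a * x^2 \<le> a * ((1 + 2 * a) * M)^2"
    by (simp add: algebra_simps power2_eq_square)
  then have "x^2 \<le> ((1 + 2 * a) * M)^2"
    using \<open>0 < a\<close> by simp
  then show ?thesis
    using \<open>0 < a\<close> \<open>0 \<le> M\<close> by (smt (verit) power2_le_imp_le power2_minus mult_nonneg_nonneg)
qed

lemma sum_gap_ineq_imp_quadratic:
  fixes \<mu> :: "nat \<Rightarrow> real" and j :: nat and x a :: real
  assumes "(\<Sum>i=1..j. (x - \<mu> i)^2) \<le> 2 * a * (\<Sum>i=1..j. (x - \<mu> i) * \<mu> i)"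
  shows "j * x^2 - (2 + 2 * a) * (\<Sum>i=1..j. \<mu> i) * x + (1 + 2 * a) * (\<Sum>i=1..j. (\<mu> i)^2) \<le> 0"
proof -
  have squares: "(\<Sum>i=1..j. (x - \<mu> i)^2) = j * x^2 - 2 * x * (\<Sum>i=1..j. \<mu> i) + (\<Sum>i=1..j. (\<mu> i)^2)"
    by (simp add: power2_eq_square algebra_simps sum.distrib sum_subtractf sum_distrib_left)
  have products: "(\<Sum>i=1..j. (x - \<mu> i) * \<mu> i) = x * (\<Sum>i=1..j. \<mu> i) - (\<Sum>i=1..j. (\<mu> i)^2)"
    by (simp add: power2_eq_square algebra_simps sum_subtractf sum_distrib_left)
  show ?thesis
    using assms unfolding squares products by (simp add: algebra_simps)
qed

lemma cheng_yang_induction_step: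
  fixes j :: nat and a S Q x M :: real
  assumes "1 \<le> j" and "0 < a"
    and quad: "j * x^2 - (2 + 2 * a) * S * x + (1 + 2 * a) * Q \<le> 0"
    and bound: "(1 + a) * S^2 - j * Q \<le> real j powr (2 * a + 2) * M"
  shows "(1 + a) * (S + x)^2 - (real j + 1) * (Q + x^2) \<le> real (Suc j) powr (2 * a + 2) * M"
proof -
  define r where "r = (1 + 1 / real j) powr a"
  have "0 < real j" using \<open>1 \<le> j\<close> by simp
  then have "0 < 1 + 1 / real j" by (intro add_pos_pos) simp_all
  have r_sq: "r^2 = (1 + 1 / real j) powr (2 * a)"
    unfolding r_def by (simp add: powr_powr[symmetric] power2_eq_square powr_add[symmetric])
  have "0 < r" and ratio: "(1 + 2 * a) * r \<le> (real j + 1) * r^2 - real j"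
    using cheng_yang_ratio_ineq[of "real j" "2 * a"] \<open>0 < real j\<close> \<open>0 < a\<close> \<open>0 < 1 + 1 / real j\<close>
    unfolding r_sq unfolding r_def by simp_all
  have "(real j)^2 * ((1 + a) * (S + x)^2 - (real j + 1) * (Q + x^2))
      \<le> (real j + 1)^2 * r^2 * ((1 + a) * S^2 - j * Q)"
    using cheng_yang_step[OF \<open>0 < real j\<close> _ \<open>0 < r\<close> ratio quad] \<open>0 < a\<close> by simp
  also have "\<dots> \<le> (real j + 1)^2 * r^2 * (real j powr (2 * a + 2) * M)"
    using bound by (intro mult_left_mono) auto
  also have "\<dots> = (real j)^2 * (real (Suc j) powr (2 * a + 2) * M)"
  proof -
    have "(1 + 1 / real j) * real j = real j + 1"
      using \<open>0 < real j\<close> by (simp add: field_simps)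
    then have "r^2 * real j powr (2 * a) = (real j + 1) powr (2 * a)"
      unfolding r_sq using \<open>0 < real j\<close> \<open>0 < 1 + 1 / real j\<close> by (simp add: powr_mult[symmetric])
    then show ?thesis
      using \<open>0 < real j\<close> by (simp add: powr_add powr_realpow algebra_simps)
  qed
  finally show ?thesis
    using \<open>0 < real j\<close> by simp
qed

lemma cheng_yang_potential_bound:
  fixes \<mu> :: "nat \<Rightarrow> real" and a :: real and j k :: nat
  assumes "0 < a"
    and quad: "\<And>j. 1 \<le> j \<Longrightarrow> j \<le> k \<Longrightarrow> real j * (\<mu> (j+1))^2
      - (2 + 2 * a) * (\<Sum>i=1..j. \<mu> i) * \<mu> (j+1) + (1 + 2 * a) * (\<Sum>i=1..j. (\<mu> i)^2) \<le> 0"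
    and "1 \<le> j" and "j \<le> k"
  shows "(1 + a) * (\<Sum>i=1..j. \<mu> i)^2 - real j * (\<Sum>i=1..j. (\<mu> i)^2)
           \<le> real j powr (2 * a + 2) * (a * (\<mu> 1)^2)"
  using assms(3,4)
proof (induction j rule: dec_induct)
  case base
  show ?case by (simp add: algebra_simps)
next
  case (step j)
  then have "j \<le> k" by simp
  have "(\<Sum>i=1..Suc j. \<mu> i) = (\<Sum>i=1..j. \<mu> i) + \<mu> (j+1)"
    "(\<Sum>i=1..Suc j. (\<mu> i)^2) = (\<Sum>i=1..j. (\<mu> i)^2) + (\<mu> (j+1))^2"
    using step by simp_all
  then show ?case
    using cheng_yang_induction_step[OF step(1) \<open>0 < a\<close> quad[OF step(1) \<open>j \<le> k\<close>] step.IH[OF \<open>j \<le> k\<close>]]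
    by (simp add: algebra_simps)
qed

lemma cheng_yang_recursion:
  fixes \<mu> :: "nat \<Rightarrow> real" and a :: real and k :: nat
  assumes "0 \<le> a" and "1 \<le> k" and "0 \<le> \<mu> 1"
    and gap: "\<And>j. 1 \<le> j \<Longrightarrow> j \<le> k \<Longrightarrow>
      (\<Sum>i=1..j. (\<mu> (j+1) - \<mu> i)^2) \<le> 2 * a * (\<Sum>i=1..j. (\<mu> (j+1) - \<mu> i) * \<mu> i)"
  shows "\<mu> (k+1) \<le> (1 + 2 * a) * real k powr a * \<mu> 1"
proof (cases "a = 0")
  case True
  have "(\<Sum>i=1..k. (\<mu> (k+1) - \<mu> i)^2) \<le> 0"
    using gap[OF \<open>1 \<le> k\<close> order.refl] True by simp
  then have "\<forall>i\<in>{1..k}. (\<mu> (k+1) - \<mu> i)^2 = 0"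
    using sum_nonneg_eq_0_iff[of "{1..k}" "\<lambda>i. (\<mu> (k+1) - \<mu> i)^2"]
    by (simp add: order_antisym sum_nonneg)
  then have "(\<mu> (k+1) - \<mu> 1)^2 = 0"
    using \<open>1 \<le> k\<close> by simp
  then show ?thesis
    using True \<open>1 \<le> k\<close> by simp
next
  case False
  with \<open>0 \<le> a\<close> have "0 < a" by simp
  note quad = sum_gap_ineq_imp_quadratic[OF gap]
  have "\<mu> (k+1) \<le> (1 + 2 * a) * (real k powr a * \<mu> 1)"
  proof (rule cheng_yang_final_step[OF _ \<open>0 < a\<close> _ quad[OF \<open>1 \<le> k\<close> order.refl]])
    show "0 < real k" "0 \<le> real k powr a * \<mu> 1"
      using \<open>1 \<le> k\<close> \<open>0 \<le> \<mu> 1\<close> by simp_all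
    have "real k powr (2 * a + 2) * (a * (\<mu> 1)^2) = (real k)^2 * a * (real k powr a * \<mu> 1)^2"
      using \<open>1 \<le> k\<close> by (simp add: powr_add powr_realpow power_mult_distrib powr_powr[symmetric]
          power2_eq_square algebra_simps)
    then show "(1 + a) * (\<Sum>i=1..k. \<mu> i)^2 - real k * (\<Sum>i=1..k. (\<mu> i)^2)
        \<le> (real k)^2 * a * (real k powr a * \<mu> 1)^2"
      using cheng_yang_potential_bound[OF \<open>0 < a\<close> quad \<open>1 \<le> k\<close> order.refl] by linarith
  qed
  then show ?thesis by (simp add: algebra_simps)
qed

section \<open>Infinite sums and quadratic forms\<close>

lemma has_sum_diff:
  fixes f g :: "'a \<Rightarrow> 'b::topological_ab_group_add"
  assumes "(f has_sum a) A" and "(g has_sum b) A"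
  shows "((\<lambda>x. f x - g x) has_sum (a - b)) A"
proof -
  have "((\<lambda>x. - g x) has_sum - b) A"
    using assms(2) by (simp add: has_sum_uminus)
  from has_sum_add[OF assms(1) this] show ?thesis by simp
qed

lemma infsum_diff:
  fixes f g :: "'a \<Rightarrow> 'b::{topological_ab_group_add, t2_space}"
  assumes "f summable_on A" and "g summable_on A"
  shows "(\<Sum>\<^sub>\<infinity>x\<in>A. f x - g x) = infsum f A - infsum g A"
  using has_sum_diff[OF has_sum_infsum[OF assms(1)] has_sum_infsum[OF assms(2)]] by (rule infsumI)

lemma summable_on_abs_comparison_real:
  fixes f :: "'a \<Rightarrow> real"
  assumes "g summable_on A" and "\<And>x. x \<in> A \<Longrightarrow> \<bar>f x\<bar> \<le> g x"
  shows "f summable_on A"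
proof -
  have "(\<lambda>x. norm (f x)) summable_on A"
    by (rule Infinite_Sum.abs_summable_on_comparison_test'[OF assms(1)]) (use assms(2) in auto)
  then show ?thesis using summable_on_iff_abs_summable_on_real by blast
qed

lemma has_sum_iterated_nonneg:
  fixes D :: "'a \<Rightarrow> 'b \<Rightarrow> real"
  assumes "\<And>x y. 0 \<le> D x y"
    and "\<And>y. ((\<lambda>x. D x y) has_sum s y) UNIV"
    and "s summable_on UNIV"
  shows "((\<lambda>x. \<Sum>\<^sub>\<infinity>y. D x y) has_sum (\<Sum>\<^sub>\<infinity>y. s y)) UNIV"
    and "\<And>x. D x summable_on UNIV"
    and "(\<lambda>(x, y). D x y) summable_on UNIV \<times> UNIV"
proof -
  define f where "f = (\<lambda>(y, x). D x y)"
  have "f summable_on UNIV \<times> UNIV"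
    by (rule summable_on_SigmaI[where g = s]) (use assms in \<open>auto simp: f_def\<close>)
  then have "(f has_sum (\<Sum>\<^sub>\<infinity>y. s y)) (UNIV \<times> UNIV)"
    by (intro has_sum_SigmaI[where g = s]) (use assms in \<open>auto simp: f_def\<close>)
  then have joint: "((\<lambda>(x, y). D x y) has_sum (\<Sum>\<^sub>\<infinity>y. s y)) (UNIV \<times> UNIV)"
    using has_sum_swap[of f UNIV UNIV] by (simp add: f_def)
  then show joint_summable: "(\<lambda>(x, y). D x y) summable_on UNIV \<times> UNIV"
    by (auto simp: summable_on_def)
  show rows: "\<And>x. D x summable_on UNIV"
    using summable_on_SigmaD1[OF joint_summable[unfolded Sigma_def[symmetric]]] by auto
  show "((\<lambda>x. \<Sum>\<^sub>\<infinity>y. D x y) has_sum (\<Sum>\<^sub>\<infinity>y. s y)) UNIV"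
    by (rule has_sum_Sigma'[OF joint]) (use rows in auto)
qed

lemma quadratic_nonneg_imp_discriminant:
  fixes a b c :: real
  assumes "0 \<le> c" and nonneg: "\<And>s. 0 \<le> a - 2 * s * b + s^2 * c"
  shows "b^2 \<le> a * c"
proof (cases "c = 0")
  case True
  have "b = 0"
  proof (rule ccontr)
    assume "b \<noteq> 0"
    then have "a - 2 * ((a + 1) / (2 * b)) * b = -1" by (simp add: field_simps)
    then show False using nonneg[of "(a + 1) / (2 * b)"] True by simp
  qed
  then show ?thesis using True by simp
next
  case False
  with \<open>0 \<le> c\<close> have "0 < c" by simp
  have "0 \<le> a - 2 * (b / c) * b + (b / c)^2 * c" by (rule nonneg)
  also have "\<dots> = (a * c - b^2) / c"
    using \<open>0 < c\<close> by (simp add: field_simps power2_eq_square)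
  finally show ?thesis using \<open>0 < c\<close> by (simp add: zero_le_divide_iff)
qed

lemma infsum_weighted_square_le:
  fixes w a :: "'a \<Rightarrow> real"
  assumes nonneg: "\<And>i. i \<in> A \<Longrightarrow> 0 \<le> w i"
    and weights: "(w has_sum W) A"
    and squares: "(\<lambda>i. w i * (a i)^2) summable_on A"
  shows "(\<lambda>i. w i * a i) summable_on A"
    and "(\<Sum>\<^sub>\<infinity>i\<in>A. w i * a i)^2 \<le> W * (\<Sum>\<^sub>\<infinity>i\<in>A. w i * (a i)^2)"
proof -
  have "w summable_on A" using weights by (auto simp: summable_on_def)
  show products: "(\<lambda>i. w i * a i) summable_on A"
  proof (rule summable_on_abs_comparison_real)
    show "(\<lambda>i. w i + w i * (a i)^2) summable_on A"
      by (rule summable_on_add[OF \<open>w summable_on A\<close> squares])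
    fix i assume "i \<in> A"
    have "0 \<le> (\<bar>a i\<bar> - 1)^2" by simp
    then have "\<bar>a i\<bar> \<le> 1 + (a i)^2"
      by (simp add: power2_diff power2_abs)
    then have "w i * \<bar>a i\<bar> \<le> w i * (1 + (a i)^2)"
      using nonneg[OF \<open>i \<in> A\<close>] by (rule mult_left_mono)
    then show "\<bar>w i * a i\<bar> \<le> w i + w i * (a i)^2"
      using nonneg[OF \<open>i \<in> A\<close>] by (simp add: abs_mult distrib_left)
  qed
  have "0 \<le> W" by (rule has_sum_nonneg[OF weights nonneg])
  show "(\<Sum>\<^sub>\<infinity>i\<in>A. w i * a i)^2 \<le> W * (\<Sum>\<^sub>\<infinity>i\<in>A. w i * (a i)^2)"
  proof (rule quadratic_nonneg_imp_discriminant[OF \<open>0 \<le> W\<close>, of "\<Sum>\<^sub>\<infinity>i\<in>A. w i * (a i)^2",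
        unfolded mult.commute[of "\<Sum>\<^sub>\<infinity>i\<in>A. w i * (a i)^2"]])
    fix s :: real
    have "((\<lambda>i. w i * (a i)^2 - 2 * s * (w i * a i) + s^2 * w i) has_sum
        ((\<Sum>\<^sub>\<infinity>i\<in>A. w i * (a i)^2) - 2 * s * (\<Sum>\<^sub>\<infinity>i\<in>A. w i * a i) + s^2 * W)) A"
      by (intro has_sum_add has_sum_diff has_sum_cmult_right weights has_sum_infsum squares
          products)
    moreover have "w i * (a i)^2 - 2 * s * (w i * a i) + s^2 * w i = w i * (a i - s)^2" for i
      by (simp add: algebra_simps power2_eq_square)
    ultimately have "((\<lambda>i. w i * (a i - s)^2) has_sum
        ((\<Sum>\<^sub>\<infinity>i\<in>A. w i * (a i)^2) - 2 * s * (\<Sum>\<^sub>\<infinity>i\<in>A. w i * a i) + s^2 * W)) A"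
      by simp
    then show "0 \<le> (\<Sum>\<^sub>\<infinity>i\<in>A. w i * (a i)^2) - 2 * s * (\<Sum>\<^sub>\<infinity>i\<in>A. w i * a i) + s^2 * W"
      by (rule has_sum_nonneg) (use nonneg in simp)
  qed
qed

lemma cauchy_schwarz_form:
  fixes B :: "('a \<Rightarrow> real) \<Rightarrow> ('a \<Rightarrow> real) \<Rightarrow> real" and V :: "('a \<Rightarrow> real) set"
  assumes closed: "\<And>g h s. g \<in> V \<Longrightarrow> h \<in> V \<Longrightarrow> (\<lambda>x. g x - s * h x) \<in> V"
    and linear: "\<And>g h k s. g \<in> V \<Longrightarrow> h \<in> V \<Longrightarrow> k \<in> V \<Longrightarrow>
      B (\<lambda>x. g x - s * h x) k = B g k - s * B h k"
    and symmetric: "\<And>g h. g \<in> V \<Longrightarrow> h \<in> V \<Longrightarrow> B g h = B h g"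
    and nonneg: "\<And>g. g \<in> V \<Longrightarrow> 0 \<le> B g g"
    and "g \<in> V" and "h \<in> V"
  shows "(B g h)^2 \<le> B g g * B h h"
proof (rule quadratic_nonneg_imp_discriminant[OF nonneg[OF \<open>h \<in> V\<close>]])
  fix s :: real
  have gsh: "(\<lambda>x. g x - s * h x) \<in> V" using closed assms by blast
  have "B (\<lambda>x. g x - s * h x) (\<lambda>x. g x - s * h x) = B g g - 2 * s * B g h + s^2 * B h h"
    using linear[OF \<open>g \<in> V\<close> \<open>h \<in> V\<close> gsh, of s] linear[OF \<open>g \<in> V\<close> \<open>h \<in> V\<close> \<open>g \<in> V\<close>, of s]
      linear[OF \<open>g \<in> V\<close> \<open>h \<in> V\<close> \<open>h \<in> V\<close>, of s] symmetric[OF \<open>g \<in> V\<close> gsh]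
      symmetric[OF \<open>h \<in> V\<close> gsh] symmetric[OF \<open>g \<in> V\<close> \<open>h \<in> V\<close>]
    by (simp add: algebra_simps power2_eq_square)
  then show "0 \<le> B g g - 2 * s * B g h + s^2 * B h h"
    using nonneg[OF gsh] by simp
qed

lemma geometric_has_sum:
  fixes r :: real
  assumes "0 < r" and "r < 1"
  shows "((\<lambda>n::nat. r^(n+1)) has_sum (r / (1 - r))) UNIV"
proof -
  have "(\<lambda>n. r * r^n) sums (r * (1 / (1 - r)))"
    using sums_mult[OF geometric_sums[of r]] assms by simp
  then show ?thesis
    by (intro sums_nonneg_imp_has_sum) (use assms in simp_all)
qed

lemma has_sum_Suc_shift:
  fixes f :: "nat \<Rightarrow> 'a::topological_comm_monoid_add"
  assumes "((\<lambda>n. f (Suc n)) has_sum S) UNIV"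
  shows "(f has_sum (f 0 + S)) UNIV"
proof -
  have "(f has_sum S) (range Suc)"
    using assms by (simp add: has_sum_reindex o_def)
  then have "(f has_sum (f 0 + S)) (insert 0 (range Suc))"
    by (rule has_sum_insert[rotated]) auto
  moreover have "insert 0 (range Suc) = UNIV"
    using not0_implies_Suc by auto
  ultimately show ?thesis by simp
qed

lemma infsum_finite_support:
  fixes f :: "'a \<Rightarrow> real"
  assumes "finite \<Omega>" and "\<And>x. x \<notin> \<Omega> \<Longrightarrow> f x = 0"
  shows "f summable_on UNIV" and "(\<Sum>\<^sub>\<infinity>x. f x) = sum f \<Omega>"
proof -
  have "(f has_sum sum f \<Omega>) UNIV"
    by (rule has_sum_finite_neutralI) (use assms in auto)
  then show "f summable_on UNIV" "(\<Sum>\<^sub>\<infinity>x. f x) = sum f \<Omega>"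
    by (auto simp: has_sum_imp_summable infsumI)
qed

lemma infsum_mult_finite_support_bij:
  fixes F g :: "'a \<Rightarrow> real" and n :: nat
  assumes "finite \<Omega>" and "bij_betw e {0..<n} \<Omega>"
    and "\<And>x. x \<notin> \<Omega> \<Longrightarrow> g x = 0" and "\<And>j. j < n \<Longrightarrow> g (e j) = v j"
  shows "(\<Sum>\<^sub>\<infinity>x. F x * g x) = (\<Sum>j<n. F (e j) * v j)"
proof -
  have "(\<Sum>\<^sub>\<infinity>x. F x * g x) = (\<Sum>x\<in>\<Omega>. F x * g x)"
    using infsum_finite_support(2)[OF assms(1)] assms(3) by simp
  also have "\<dots> = (\<Sum>j<n. F (e j) * g (e j))"
    using sum.reindex_bij_betw[OF assms(2), of "\<lambda>x. F x * g x"] by (simp add: atLeast0LessThan)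
  finally show ?thesis
    using assms(4) by simp
qed

section \<open>The Laplacian on real-valued functions in \<open>L\<^sup>2(\<pi>)\<close>\<close>

locale network_space =
  fixes c :: "'a::countable \<Rightarrow> 'a \<Rightarrow> real"
  assumes network: "network c"
begin

abbreviation \<pi> :: "'a \<Rightarrow> real" where "\<pi> \<equiv> pi_w c"
abbreviation P :: "'a \<Rightarrow> 'a \<Rightarrow> real" where "P \<equiv> trans_P c"

lemma conductance_nonneg: "0 \<le> c x y"
  and conductance_sym: "c x y = c y x"
  and conductance_has_sum: "(c x has_sum \<pi> x) UNIV"
  and pi_pos: "0 < \<pi> x"
  using network unfolding network_def pi_w_def by auto

lemma conductance_le_pi: "c x y \<le> \<pi> y"
proof -
  have "sum (c y) {x} \<le> (\<Sum>\<^sub>\<infinity>z. c y z)"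
    using conductance_has_sum[of y]
    by (intro finite_sum_le_infsum) (auto simp: conductance_nonneg summable_on_def)
  then have "c y x \<le> \<pi> y"
    using conductance_has_sum[of y] by (simp add: infsumI)
  then show ?thesis
    by (metis conductance_sym)
qed

lemma P_nonneg: "0 \<le> P x y"
  unfolding trans_P_def using conductance_nonneg pi_pos by (simp add: less_imp_le)

lemma pi_mult_P: "\<pi> x * P x y = c x y"
  unfolding trans_P_def using pi_pos[of x] by simp

lemma P_has_sum: "(P x has_sum 1) UNIV"
  using has_sum_cmult_left[OF conductance_has_sum[of x], of "1 / \<pi> x"] pi_pos[of x]
  unfolding trans_P_def by simp

text \<open>It suffices to work with real-valued functions: \<^const>\<open>lap\<close> acts on real and imaginary
  parts separately (lemma \<open>lap_eq\<close> below).\<close>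

definition in_L2 :: "('a \<Rightarrow> real) \<Rightarrow> bool" where
  "in_L2 g \<longleftrightarrow> (\<lambda>x. \<pi> x * (g x)^2) summable_on UNIV"

definition sqnorm :: "('a \<Rightarrow> real) \<Rightarrow> real" where
  "sqnorm g = (\<Sum>\<^sub>\<infinity>x. \<pi> x * (g x)^2)"

definition pinner :: "('a \<Rightarrow> real) \<Rightarrow> ('a \<Rightarrow> real) \<Rightarrow> real" where
  "pinner g h = (\<Sum>\<^sub>\<infinity>x. \<pi> x * g x * h x)"

lemma sqnorm_nonneg: "0 \<le> sqnorm g"
  unfolding sqnorm_def by (rule infsum_nonneg) (simp add: pi_pos less_imp_le)

lemma pi_mult_square_le_sqnorm: "in_L2 g \<Longrightarrow> \<pi> x * (g x)^2 \<le> sqnorm g"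
  using finite_sum_le_infsum[of "\<lambda>x. \<pi> x * (g x)^2" UNIV "{x}"]
  unfolding in_L2_def sqnorm_def by (simp add: pi_pos less_imp_le)

lemma in_L2_sqnorm_eq_0: "in_L2 g \<Longrightarrow> sqnorm g = 0 \<Longrightarrow> g x = 0"
  using pi_mult_square_le_sqnorm[of g x] pi_pos[of x] by (simp add: mult_le_0_iff)

lemma in_L2_scale: "in_L2 g \<Longrightarrow> in_L2 (\<lambda>x. s * g x)"
  using summable_on_cmult_right[of "\<lambda>x. \<pi> x * (g x)^2" UNIV "s^2"]
  unfolding in_L2_def by (simp add: power_mult_distrib algebra_simps)

lemma in_L2_add:
  assumes "in_L2 g" and "in_L2 h"
  shows "in_L2 (\<lambda>x. g x + h x)"
  unfolding in_L2_def
proof (rule summable_on_comparison_test)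
  show "(\<lambda>x. 2 * (\<pi> x * (g x)^2) + 2 * (\<pi> x * (h x)^2)) summable_on UNIV"
    using assms unfolding in_L2_def by (intro summable_on_add summable_on_cmult_right)
  fix x
  have "(g x + h x)^2 \<le> 2 * (g x)^2 + 2 * (h x)^2"
    using zero_le_power2[of "g x - h x"] by (simp add: power2_sum power2_diff)
  then have "\<pi> x * (g x + h x)^2 \<le> \<pi> x * (2 * (g x)^2 + 2 * (h x)^2)"
    using pi_pos[of x] by (intro mult_left_mono) auto
  then show "\<pi> x * (g x + h x)^2 \<le> 2 * (\<pi> x * (g x)^2) + 2 * (\<pi> x * (h x)^2)"
    by (simp add: algebra_simps)
  show "0 \<le> \<pi> x * (g x + h x)^2" using pi_pos[of x] by simp
qed

lemma in_L2_diff: "in_L2 g \<Longrightarrow> in_L2 h \<Longrightarrow> in_L2 (\<lambda>x. g x - s * h x)"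
  using in_L2_add[of g "\<lambda>x. (- s) * h x"] in_L2_scale[of h "- s"] by simp

lemma pinner_summable:
  assumes "in_L2 g" and "in_L2 h"
  shows "(\<lambda>x. \<pi> x * g x * h x) summable_on UNIV"
proof (rule summable_on_abs_comparison_real)
  show "(\<lambda>x. \<pi> x * (g x)^2 + \<pi> x * (h x)^2) summable_on UNIV"
    using assms unfolding in_L2_def by (rule summable_on_add)
  fix x
  have "2 * \<bar>g x * h x\<bar> \<le> (g x)^2 + (h x)^2"
    using zero_le_power2[of "\<bar>g x\<bar> - \<bar>h x\<bar>"] by (simp add: power2_diff abs_mult)
  then have "\<pi> x * \<bar>g x * h x\<bar> \<le> \<pi> x * ((g x)^2 + (h x)^2)"
    using pi_pos[of x] by (intro mult_left_mono) auto
  then show "\<bar>\<pi> x * g x * h x\<bar> \<le> \<pi> x * (g x)^2 + \<pi> x * (h x)^2"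
    using pi_pos[of x] by (simp add: abs_mult algebra_simps)
qed

lemma pinner_commute: "pinner g h = pinner h g"
  unfolding pinner_def by (simp add: algebra_simps)

lemma pinner_self: "pinner g g = sqnorm g"
  unfolding pinner_def sqnorm_def by (simp add: power2_eq_square algebra_simps)

lemma pinner_diff_left:
  assumes "in_L2 g" and "in_L2 h" and "in_L2 k"
  shows "pinner (\<lambda>x. g x - s * h x) k = pinner g k - s * pinner h k"
proof -
  have "pinner (\<lambda>x. g x - s * h x) k = (\<Sum>\<^sub>\<infinity>x. \<pi> x * g x * k x - s * (\<pi> x * h x * k x))"
    unfolding pinner_def by (simp add: algebra_simps)
  also have "\<dots> = pinner g k - s * pinner h k"
    unfolding pinner_def infsum_cmult_right'[symmetric]
    by (intro infsum_diff pinner_summable summable_on_cmult_right assms)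
  finally show ?thesis .
qed

lemma pinner_cauchy_schwarz:
  assumes "in_L2 g" and "in_L2 h"
  shows "(pinner g h)^2 \<le> sqnorm g * sqnorm h"
proof -
  have "(pinner g h)^2 \<le> pinner g g * pinner h h"
    by (rule cauchy_schwarz_form[of "Collect in_L2"])
      (use assms in \<open>auto simp: in_L2_diff pinner_diff_left pinner_self sqnorm_nonneg
        intro: pinner_commute\<close>)
  then show ?thesis by (simp add: pinner_self)
qed

lemma sqnorm_scale: "sqnorm (\<lambda>x. s * g x) = s^2 * sqnorm g"
  unfolding sqnorm_def infsum_cmult_right'[symmetric]
  by (simp add: power_mult_distrib algebra_simps)

definition transition :: "('a \<Rightarrow> real) \<Rightarrow> 'a \<Rightarrow> real" where
  "transition g x = (\<Sum>\<^sub>\<infinity>y. P x y * g y)"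

definition rlap :: "('a \<Rightarrow> real) \<Rightarrow> 'a \<Rightarrow> real" where
  "rlap g x = g x - transition g x"

lemma P_square_summable:
  assumes "in_L2 g"
  shows "(\<lambda>y. P x y * (g y)^2) summable_on UNIV"
proof (rule summable_on_comparison_test)
  show "(\<lambda>y. \<pi> y * (g y)^2 * (1 / \<pi> x)) summable_on UNIV"
    using assms unfolding in_L2_def by (rule summable_on_cmult_left)
  fix y
  show "0 \<le> P x y * (g y)^2" using P_nonneg by simp
  have "c x y * (g y)^2 \<le> \<pi> y * (g y)^2"
    using conductance_le_pi by (simp add: mult_right_mono)
  then show "P x y * (g y)^2 \<le> \<pi> y * (g y)^2 * (1 / \<pi> x)"
    unfolding trans_P_def using pi_pos[of x] by (simp add: divide_right_mono)
qed

lemma transition_summable: "in_L2 g \<Longrightarrow> (\<lambda>y. P x y * g y) summable_on UNIV"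
  using infsum_weighted_square_le(1)[OF _ P_has_sum P_square_summable] P_nonneg by blast

lemma transition_square_le: "in_L2 g \<Longrightarrow> (transition g x)^2 \<le> (\<Sum>\<^sub>\<infinity>y. P x y * (g y)^2)"
  using infsum_weighted_square_le(2)[OF _ P_has_sum P_square_summable] P_nonneg
  unfolding transition_def by simp

lemma conductance_square_has_sum:
  assumes "in_L2 g"
  shows "((\<lambda>x. \<Sum>\<^sub>\<infinity>y. c x y * (g y)^2) has_sum sqnorm g) UNIV"
    and "(\<lambda>(x, y). c x y * (g y)^2) summable_on UNIV \<times> UNIV"
proof -
  have "((\<lambda>x. c x y * (g y)^2) has_sum (\<pi> y * (g y)^2)) UNIV" for y
    using has_sum_cmult_left[OF conductance_has_sum[of y]] by (simp add: conductance_sym)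
  note iterated = has_sum_iterated_nonneg[OF _ this assms[unfolded in_L2_def]]
  show "((\<lambda>x. \<Sum>\<^sub>\<infinity>y. c x y * (g y)^2) has_sum sqnorm g) UNIV"
    using iterated(1) conductance_nonneg unfolding sqnorm_def by simp
  show "(\<lambda>(x, y). c x y * (g y)^2) summable_on UNIV \<times> UNIV"
    using iterated(3) conductance_nonneg by simp
qed

lemma transition_in_L2:
  assumes "in_L2 g"
  shows "in_L2 (transition g)" and "sqnorm (transition g) \<le> sqnorm g"
proof -
  have "\<pi> x * (\<Sum>\<^sub>\<infinity>y. P x y * (g y)^2) = (\<Sum>\<^sub>\<infinity>y. c x y * (g y)^2)" for x
    by (simp add: infsum_cmult_right'[symmetric] mult.assoc[symmetric] pi_mult_P)
  then have bound: "((\<lambda>x. \<pi> x * (\<Sum>\<^sub>\<infinity>y. P x y * (g y)^2)) has_sum sqnorm g) UNIV"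
    using conductance_square_has_sum(1)[OF assms] by simp
  have le: "\<pi> x * (transition g x)^2 \<le> \<pi> x * (\<Sum>\<^sub>\<infinity>y. P x y * (g y)^2)" for x
    using transition_square_le[OF assms] pi_pos[of x] by (intro mult_left_mono) auto
  show L2: "in_L2 (transition g)"
    unfolding in_L2_def
    by (rule summable_on_comparison_test[OF has_sum_imp_summable[OF bound] le])
      (simp add: pi_pos less_imp_le)
  have "sqnorm (transition g) \<le> (\<Sum>\<^sub>\<infinity>x. \<pi> x * (\<Sum>\<^sub>\<infinity>y. P x y * (g y)^2))"
    unfolding sqnorm_def
    by (rule infsum_mono[OF L2[unfolded in_L2_def] has_sum_imp_summable[OF bound] le])
  then show "sqnorm (transition g) \<le> sqnorm g"
    using infsumI[OF bound] by simp
qed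

lemma transition_diff:
  assumes "in_L2 g" and "in_L2 h"
  shows "transition (\<lambda>x. g x - s * h x) x = transition g x - s * transition h x"
proof -
  have "transition (\<lambda>x. g x - s * h x) x = (\<Sum>\<^sub>\<infinity>y. P x y * g y - s * (P x y * h y))"
    unfolding transition_def by (simp add: algebra_simps)
  also have "\<dots> = transition g x - s * transition h x"
    unfolding transition_def infsum_cmult_right'[symmetric]
    by (intro infsum_diff transition_summable summable_on_cmult_right assms)
  finally show ?thesis .
qed

lemma transition_self_adjoint:
  assumes g: "in_L2 g" and h: "in_L2 h"
  shows "pinner (transition g) h = pinner g (transition h)"
proof -
  define E where "E x y = c x y * g y * h x" for x y
  have "(\<lambda>(x, y). E x y) summable_on UNIV \<times> UNIV"
  proof (rule summable_on_abs_comparison_real)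
    have "(\<lambda>(x, y). c y x * (h x)^2) summable_on UNIV \<times> UNIV"
      using summable_on_swap[THEN iffD1, OF conductance_square_has_sum(2)[OF h]]
      by (simp add: case_prod_unfold)
    then show "(\<lambda>(x, y). c x y * (g y)^2 + c x y * (h x)^2) summable_on UNIV \<times> UNIV"
      using summable_on_add[OF conductance_square_has_sum(2)[OF g]]
      by (simp add: case_prod_unfold conductance_sym)
    fix p :: "'a \<times> 'a"
    obtain x y where p: "p = (x, y)" by (cases p)
    have "2 * \<bar>g y * h x\<bar> \<le> (g y)^2 + (h x)^2"
      using zero_le_power2[of "\<bar>g y\<bar> - \<bar>h x\<bar>"] by (simp add: power2_diff abs_mult)
    then have "c x y * \<bar>g y * h x\<bar> \<le> c x y * ((g y)^2 + (h x)^2)"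
      using conductance_nonneg[of x y] by (intro mult_left_mono) auto
    then show "\<bar>(\<lambda>(x, y). E x y) p\<bar> \<le> (\<lambda>(x, y). c x y * (g y)^2 + c x y * (h x)^2) p"
      unfolding p E_def using conductance_nonneg[of x y] by (simp add: abs_mult algebra_simps)
  qed
  then have "(\<Sum>\<^sub>\<infinity>x. \<Sum>\<^sub>\<infinity>y. E x y) = (\<Sum>\<^sub>\<infinity>y. \<Sum>\<^sub>\<infinity>x. E x y)"
    by (rule infsum_swap_banach)
  moreover have "(\<Sum>\<^sub>\<infinity>y. E x y) = \<pi> x * transition g x * h x" for x
    unfolding transition_def E_def infsum_cmult_right'[symmetric] infsum_cmult_left'[symmetric]
    by (simp add: mult.assoc[symmetric] pi_mult_P)
  moreover have "(\<Sum>\<^sub>\<infinity>x. E x y) = \<pi> y * g y * transition h y" for y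
    unfolding transition_def E_def infsum_cmult_right'[symmetric]
    by (intro infsum_cong)
      (simp add: mult.assoc[symmetric] mult.commute[of "g y"] pi_mult_P conductance_sym[of y])
  ultimately show ?thesis
    unfolding pinner_def by simp
qed

lemma abs_pinner_transition_le:
  assumes "in_L2 g"
  shows "\<bar>pinner (transition g) g\<bar> \<le> sqnorm g"
proof -
  have "(pinner (transition g) g)^2 \<le> sqnorm (transition g) * sqnorm g"
    by (rule pinner_cauchy_schwarz[OF transition_in_L2(1)[OF assms] assms])
  also have "\<dots> \<le> (sqnorm g)^2"
    using transition_in_L2(2)[OF assms] sqnorm_nonneg
    by (simp add: power2_eq_square mult_right_mono)
  finally show ?thesis
    using power2_le_imp_le[of "\<bar>pinner (transition g) g\<bar>" "sqnorm g"] sqnorm_nonneg by simp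
qed

lemma rlap_in_L2: "in_L2 g \<Longrightarrow> in_L2 (rlap g)"
  using in_L2_diff[OF _ transition_in_L2(1), of g g 1] unfolding rlap_def by simp

lemma rlap_diff:
  "in_L2 g \<Longrightarrow> in_L2 h \<Longrightarrow> rlap (\<lambda>x. g x - s * h x) x = rlap g x - s * rlap h x"
  unfolding rlap_def using transition_diff by (simp add: algebra_simps)

lemma pinner_rlap_self:
  assumes "in_L2 g"
  shows "pinner (rlap g) g = sqnorm g - pinner (transition g) g"
  using pinner_diff_left[OF assms transition_in_L2(1)[OF assms] assms, of 1]
  unfolding rlap_def by (simp add: pinner_self)

lemma pinner_rlap_nonneg: "in_L2 g \<Longrightarrow> 0 \<le> pinner (rlap g) g"
  using pinner_rlap_self abs_pinner_transition_le by fastforce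

lemma pinner_rlap_le: "in_L2 g \<Longrightarrow> pinner (rlap g) g \<le> 2 * sqnorm g"
  using pinner_rlap_self abs_pinner_transition_le by fastforce

lemma rlap_self_adjoint:
  assumes "in_L2 g" and "in_L2 h"
  shows "pinner (rlap g) h = pinner g (rlap h)"
  using pinner_diff_left[OF assms(1) transition_in_L2(1)[OF assms(1)] assms(2), of 1]
    pinner_diff_left[OF assms(2) transition_in_L2(1)[OF assms(2)] assms(1), of 1]
    transition_self_adjoint[OF assms]
  unfolding rlap_def by (simp add: pinner_commute)

lemma rlap_has_sum: "in_L2 g \<Longrightarrow> ((\<lambda>y. P x y * (g x - g y)) has_sum rlap g x) UNIV"
  using has_sum_diff[OF has_sum_cmult_left[OF P_has_sum, of x "g x"]
      has_sum_infsum[OF transition_summable]]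
  unfolding rlap_def transition_def by (simp add: algebra_simps)

lemma in_l2_iff: "f \<in> l2 c \<longleftrightarrow> in_L2 (\<lambda>x. Re (f x)) \<and> in_L2 (\<lambda>x. Im (f x))"
proof -
  have pointwise: "\<pi> x * (cmod (f x))^2 = \<pi> x * (Re (f x))^2 + \<pi> x * (Im (f x))^2" for f x
    by (simp add: cmod_power2 algebra_simps)
  have eq: "l2 c = {f. (\<lambda>x. \<pi> x * (Re (f x))^2 + \<pi> x * (Im (f x))^2) summable_on UNIV}"
    unfolding l2_def pointwise ..
  show ?thesis
  proof
    assume "f \<in> l2 c"
    then have sum: "(\<lambda>x. \<pi> x * (Re (f x))^2 + \<pi> x * (Im (f x))^2) summable_on UNIV"
      unfolding eq by simp
    show "in_L2 (\<lambda>x. Re (f x)) \<and> in_L2 (\<lambda>x. Im (f x))"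
      unfolding in_L2_def
      by (intro conjI summable_on_comparison_test[OF sum]) (simp_all add: pi_pos less_imp_le)
  next
    assume "in_L2 (\<lambda>x. Re (f x)) \<and> in_L2 (\<lambda>x. Im (f x))"
    then show "f \<in> l2 c"
      unfolding eq in_L2_def by (simp add: summable_on_add)
  qed
qed

lemma l2norm_eq:
  assumes "f \<in> l2 c"
  shows "l2norm c f = sqrt (sqnorm (\<lambda>x. Re (f x)) + sqnorm (\<lambda>x. Im (f x)))"
proof -
  have "(\<Sum>\<^sub>\<infinity>x. \<pi> x * (cmod (f x))^2) = (\<Sum>\<^sub>\<infinity>x. \<pi> x * (Re (f x))^2 + \<pi> x * (Im (f x))^2)"
    by (simp add: cmod_power2 algebra_simps)
  also have "\<dots> = sqnorm (\<lambda>x. Re (f x)) + sqnorm (\<lambda>x. Im (f x))"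
    using assms unfolding sqnorm_def in_l2_iff in_L2_def by (intro infsum_add) auto
  finally show ?thesis unfolding l2norm_def by simp
qed

lemma l2norm_of_real: "l2norm c (\<lambda>x. complex_of_real (g x)) = sqrt (sqnorm g)"
  unfolding l2norm_def sqnorm_def by simp

lemma of_real_in_l2: "in_L2 g \<Longrightarrow> (\<lambda>x. complex_of_real (g x)) \<in> l2 c"
  unfolding in_l2_iff by (simp add: in_L2_def)

lemma lap_eq:
  assumes "f \<in> l2 c"
  shows "lap c f x = complex_of_real (rlap (\<lambda>y. Re (f y)) x)
    + \<i> * complex_of_real (rlap (\<lambda>y. Im (f y)) x)"
proof -
  have "complex_of_real (P x y) * (f x - f y) =
      complex_of_real (P x y * (Re (f x) - Re (f y)))
        + \<i> * complex_of_real (P x y * (Im (f x) - Im (f y)))"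
    for y by (simp add: complex_eq_iff)
  moreover have "((\<lambda>y. complex_of_real (P x y * (Re (f x) - Re (f y)))
        + \<i> * complex_of_real (P x y * (Im (f x) - Im (f y)))) has_sum
      complex_of_real (rlap (\<lambda>y. Re (f y)) x) + \<i> * complex_of_real (rlap (\<lambda>y. Im (f y)) x)) UNIV"
    using assms unfolding in_l2_iff
    by (intro has_sum_add has_sum_cmult_right has_sum_of_real rlap_has_sum) auto
  ultimately show ?thesis
    unfolding lap_def by (simp add: infsumI)
qed

lemma lap_of_real: "in_L2 g \<Longrightarrow> lap c (\<lambda>x. complex_of_real (g x)) x = complex_of_real (rlap g x)"
  using lap_eq[OF of_real_in_l2] by (simp add: rlap_def transition_def)

section \<open>The bottom of the spectrum\<close>

definition rayleigh_quotients :: "real set" where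
  "rayleigh_quotients = {pinner (rlap g) g / sqnorm g | g. in_L2 g \<and> 0 < sqnorm g}"

lemma rayleigh_quotients_nonempty: "rayleigh_quotients \<noteq> {}"
proof -
  fix x :: 'a
  define g :: "'a \<Rightarrow> real" where "g y = (if y = x then 1 else 0)" for y
  have "((\<lambda>y. \<pi> y * (g y)^2) has_sum \<pi> x) UNIV"
    by (rule has_sum_finite_neutralI[of "{x}"]) (simp_all add: g_def)
  then have "in_L2 g" "sqnorm g = \<pi> x"
    unfolding in_L2_def sqnorm_def by (simp_all add: has_sum_imp_summable infsumI)
  then have "pinner (rlap g) g / sqnorm g \<in> rayleigh_quotients"
    unfolding rayleigh_quotients_def using pi_pos[of x] by (intro CollectI exI[of _ g]) simp
  then show ?thesis by blast
qed

lemma rayleigh_quotients_nonneg: "q \<in> rayleigh_quotients \<Longrightarrow> 0 \<le> q"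
  unfolding rayleigh_quotients_def by (auto intro!: divide_nonneg_pos pinner_rlap_nonneg)

lemma Inf_rayleigh_nonneg: "0 \<le> Inf rayleigh_quotients"
  by (rule cInf_greatest[OF rayleigh_quotients_nonempty rayleigh_quotients_nonneg])

lemma Inf_rayleigh_le:
  assumes "in_L2 g"
  shows "Inf rayleigh_quotients * sqnorm g \<le> pinner (rlap g) g"
proof (cases "0 < sqnorm g")
  case True
  have "bdd_below rayleigh_quotients"
    using rayleigh_quotients_nonneg by (rule bdd_belowI)
  moreover have "pinner (rlap g) g / sqnorm g \<in> rayleigh_quotients"
    unfolding rayleigh_quotients_def using True assms by auto
  ultimately have "Inf rayleigh_quotients \<le> pinner (rlap g) g / sqnorm g"
    by (rule cInf_lower[rotated])
  then show ?thesis using True by (simp add: pos_le_divide_eq)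
next
  case False
  then have "sqnorm g = 0" using sqnorm_nonneg[of g] by simp
  then show ?thesis using pinner_rlap_nonneg[OF assms] by simp
qed

lemma resolvent_bounded_below:
  assumes "complex_of_real t \<in> resolvent_set c"
  obtains B where "\<And>g. in_L2 g \<Longrightarrow> sqnorm g \<le> B * sqnorm (\<lambda>x. rlap g x - t * g x)"
proof -
  obtain S B where bounded: "\<And>f. f \<in> l2 c \<Longrightarrow> l2norm c (S f) \<le> B * l2norm c f"
    and left_inverse: "\<And>f. f \<in> l2 c \<Longrightarrow> S (\<lambda>x. lap c f x - complex_of_real t * f x) = f"
    using assms unfolding resolvent_set_def by blast
  have "sqnorm g \<le> B^2 * sqnorm (\<lambda>x. rlap g x - t * g x)" if "in_L2 g" for g
  proof -
    define h where "h x = rlap g x - t * g x" for x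
    have "in_L2 h"
      unfolding h_def using \<open>in_L2 g\<close> by (intro in_L2_diff rlap_in_L2)
    have "S (\<lambda>x. complex_of_real (h x)) = (\<lambda>x. complex_of_real (g x))"
      using left_inverse[OF of_real_in_l2[OF \<open>in_L2 g\<close>]] lap_of_real[OF \<open>in_L2 g\<close>]
      unfolding h_def by simp
    then have "sqrt (sqnorm g) \<le> B * sqrt (sqnorm h)"
      using bounded[OF of_real_in_l2[OF \<open>in_L2 h\<close>]] by (simp add: l2norm_of_real)
    then have "(sqrt (sqnorm g))^2 \<le> (B * sqrt (sqnorm h))^2"
      by (rule power_mono) (simp add: sqnorm_nonneg)
    then show ?thesis
      using sqnorm_nonneg unfolding h_def by (simp add: power_mult_distrib)
  qed
  then show ?thesis using that by blast
qed

lemma shifted_rlap_cauchy_schwarz: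
  assumes "in_L2 g" and "in_L2 h"
  defines "m \<equiv> Inf rayleigh_quotients"
  shows "(pinner (\<lambda>x. rlap g x - m * g x) h)^2
           \<le> (pinner (rlap g) g - m * sqnorm g) * (pinner (rlap h) h - m * sqnorm h)"
proof -
  define A where "A u x = rlap u x - m * u x" for u x
  have form: "pinner (A u) v = pinner (rlap u) v - m * pinner u v" if "in_L2 u" "in_L2 v" for u v
    unfolding A_def using that by (intro pinner_diff_left rlap_in_L2)
  have "(pinner (A g) h)^2 \<le> pinner (A g) g * pinner (A h) h"
  proof (rule cauchy_schwarz_form[of "Collect in_L2" "\<lambda>u v. pinner (A u) v"])
    fix u v w s assume "u \<in> Collect in_L2" "v \<in> Collect in_L2" "w \<in> Collect in_L2"
    moreover have "A (\<lambda>x. u x - s * v x) = (\<lambda>x. A u x - s * A v x)"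
      using \<open>u \<in> Collect in_L2\<close> \<open>v \<in> Collect in_L2\<close>
      unfolding A_def by (auto simp: rlap_diff algebra_simps)
    ultimately show "pinner (A (\<lambda>x. u x - s * v x)) w = pinner (A u) w - s * pinner (A v) w"
      unfolding A_def by (simp add: pinner_diff_left in_L2_diff rlap_in_L2)
    show "pinner (A u) v = pinner (A v) u"
      using \<open>u \<in> Collect in_L2\<close> \<open>v \<in> Collect in_L2\<close>
      by (simp add: form rlap_self_adjoint pinner_commute[of u])
  next
    show "0 \<le> pinner (A u) u" if "u \<in> Collect in_L2" for u
      using that form Inf_rayleigh_le unfolding m_def by (simp add: pinner_self)
  qed (use assms in_L2_diff in auto)
  then show ?thesis
    using form assms(1,2) unfolding A_def by (simp add: pinner_self)
qed

text \<open>Functions whose Rayleigh quotient is close to the infimum \<open>m\<close> are approximate eigenfunctions.\<close>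

lemma sqnorm_shifted_rlap_le:
  assumes "in_L2 g"
  defines "m \<equiv> Inf rayleigh_quotients"
  shows "sqnorm (\<lambda>x. rlap g x - m * g x) \<le> 2 * (pinner (rlap g) g - m * sqnorm g)"
proof -
  define h where "h x = rlap g x - m * g x" for x
  have "in_L2 h"
    unfolding h_def using assms by (intro in_L2_diff rlap_in_L2)
  have "0 \<le> pinner (rlap g) g - m * sqnorm g"
    using Inf_rayleigh_le[OF assms(1)] unfolding m_def by simp
  have "(sqnorm h)^2 = (pinner (\<lambda>x. rlap g x - m * g x) h)^2"
    unfolding h_def by (simp add: pinner_self)
  also have "\<dots> \<le> (pinner (rlap g) g - m * sqnorm g) * (pinner (rlap h) h - m * sqnorm h)"
    using shifted_rlap_cauchy_schwarz[OF assms(1) \<open>in_L2 h\<close>] unfolding m_def .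
  also have "\<dots> \<le> (pinner (rlap g) g - m * sqnorm g) * (2 * sqnorm h)"
    using pinner_rlap_le[OF \<open>in_L2 h\<close>]
      mult_nonneg_nonneg[OF Inf_rayleigh_nonneg sqnorm_nonneg[of h]]
      \<open>0 \<le> pinner (rlap g) g - m * sqnorm g\<close>
    unfolding m_def by (intro mult_left_mono) auto
  finally have "sqnorm h * sqnorm h \<le> (2 * (pinner (rlap g) g - m * sqnorm g)) * sqnorm h"
    by (simp add: power2_eq_square algebra_simps)
  then have "sqnorm h \<le> 2 * (pinner (rlap g) g - m * sqnorm g)"
    using sqnorm_nonneg[of h] \<open>0 \<le> pinner (rlap g) g - m * sqnorm g\<close>
    by (cases "sqnorm h = 0") (simp_all add: mult_le_cancel_right)
  then show ?thesis
    unfolding h_def .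
qed

lemma Inf_rayleigh_not_in_resolvent_set:
  "complex_of_real (Inf rayleigh_quotients) \<notin> resolvent_set c"
proof
  define m where "m = Inf rayleigh_quotients"
  assume "complex_of_real (Inf rayleigh_quotients) \<in> resolvent_set c"
  then obtain B where B: "\<And>g. in_L2 g \<Longrightarrow> sqnorm g \<le> B * sqnorm (\<lambda>x. rlap g x - m * g x)"
    using resolvent_bounded_below unfolding m_def by blast
  define \<epsilon> where "\<epsilon> = 1 / (2 * (\<bar>B\<bar> + 1))"
  have "0 < \<epsilon>" "2 * \<bar>B\<bar> * \<epsilon> < 1"
    unfolding \<epsilon>_def by (simp_all add: field_simps)
  then obtain q where "q \<in> rayleigh_quotients" "q < m + \<epsilon>"
    using cInf_lessD[OF rayleigh_quotients_nonempty, of "m + \<epsilon>"] unfolding m_def by auto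
  then obtain g where g: "in_L2 g" "0 < sqnorm g" and "pinner (rlap g) g / sqnorm g < m + \<epsilon>"
    unfolding rayleigh_quotients_def by blast
  then have "pinner (rlap g) g - m * sqnorm g < \<epsilon> * sqnorm g"
    by (simp add: pos_divide_less_eq algebra_simps)
  have "sqnorm g \<le> \<bar>B\<bar> * sqnorm (\<lambda>x. rlap g x - m * g x)"
    using B[OF g(1)] sqnorm_nonneg by (smt (verit) mult_right_mono)
  also have "\<dots> \<le> \<bar>B\<bar> * (2 * (pinner (rlap g) g - m * sqnorm g))"
    using sqnorm_shifted_rlap_le[OF g(1)] unfolding m_def by (intro mult_left_mono) auto
  also have "\<dots> \<le> \<bar>B\<bar> * (2 * (\<epsilon> * sqnorm g))"
    using \<open>pinner (rlap g) g - m * sqnorm g < \<epsilon> * sqnorm g\<close> by (intro mult_left_mono) auto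
  also have "\<dots> < sqnorm g"
    using \<open>2 * \<bar>B\<bar> * \<epsilon> < 1\<close> g(2) by (simp add: algebra_simps)
  finally show False by simp
qed

lemma transition_iterate_in_L2:
  assumes "in_L2 g"
  shows "in_L2 ((transition ^^ n) g)" and "sqnorm ((transition ^^ n) g) \<le> sqnorm g"
proof -
  have "in_L2 ((transition ^^ n) g) \<and> sqnorm ((transition ^^ n) g) \<le> sqnorm g"
  proof (induction n)
    case (Suc n)
    then show ?case
      using transition_in_L2[of "(transition ^^ n) g"] by (simp add: order_trans)
  qed (use assms in simp)
  then show "in_L2 ((transition ^^ n) g)" "sqnorm ((transition ^^ n) g) \<le> sqnorm g"
    by simp_all
qed

lemma transition_iterate_square_le:
  assumes "in_L2 g"
  shows "((transition ^^ n) g x)^2 \<le> sqnorm g / \<pi> x"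
proof -
  have "\<pi> x * ((transition ^^ n) g x)^2 \<le> sqnorm g"
    using pi_mult_square_le_sqnorm[OF transition_iterate_in_L2(1)[OF assms]]
      transition_iterate_in_L2(2)[OF assms] by (rule order_trans)
  then show ?thesis
    using pi_pos[of x] by (simp add: pos_le_divide_eq mult.commute)
qed

lemma transition_abs_le:
  assumes "in_L2 h"
  shows "(\<lambda>y. P x y * \<bar>h y\<bar>) summable_on UNIV"
    and "(\<Sum>\<^sub>\<infinity>y. P x y * \<bar>h y\<bar>) \<le> sqrt (sqnorm h / \<pi> x)"
proof -
  have "in_L2 (\<lambda>y. \<bar>h y\<bar>)" using assms unfolding in_L2_def by simp
  then show "(\<lambda>y. P x y * \<bar>h y\<bar>) summable_on UNIV"
    by (rule transition_summable)
  have "(transition (\<lambda>y. \<bar>h y\<bar>) x)^2 \<le> (\<Sum>\<^sub>\<infinity>y. P x y * (h y)^2)"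
    using transition_square_le[OF \<open>in_L2 (\<lambda>y. \<bar>h y\<bar>)\<close>] by simp
  also have "\<dots> \<le> sqnorm h / \<pi> x"
  proof -
    have "\<pi> x * (\<Sum>\<^sub>\<infinity>y. P x y * (h y)^2) = (\<Sum>\<^sub>\<infinity>y. c x y * (h y)^2)"
      by (simp add: infsum_cmult_right'[symmetric] mult.assoc[symmetric] pi_mult_P)
    also have "\<dots> \<le> sqnorm h"
      unfolding sqnorm_def
    proof (rule infsum_mono)
      show le: "c x y * (h y)^2 \<le> \<pi> y * (h y)^2" for y
        by (rule mult_right_mono[OF conductance_le_pi]) simp
      show "(\<lambda>y. \<pi> y * (h y)^2) summable_on UNIV"
        using assms unfolding in_L2_def .
      then show "(\<lambda>y. c x y * (h y)^2) summable_on UNIV"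
        by (rule summable_on_comparison_test[OF _ le]) (simp add: conductance_nonneg)
    qed
    finally show ?thesis
      using pi_pos[of x] by (simp add: pos_le_divide_eq mult.commute)
  qed
  finally show "(\<Sum>\<^sub>\<infinity>y. P x y * \<bar>h y\<bar>) \<le> sqrt (sqnorm h / \<pi> x)"
    unfolding transition_def by (simp add: real_le_rsqrt)
qed

text \<open>For \<open>t < 0\<close> and \<open>r = 1 / (1 - t)\<close>, \<open>neumann r\<close> is the Neumann series of
  \<open>((1 - t) - transition)\<^sup>-\<^sup>1 = (rlap - t)\<^sup>-\<^sup>1\<close>.\<close>

definition neumann :: "real \<Rightarrow> ('a \<Rightarrow> real) \<Rightarrow> 'a \<Rightarrow> real" where
  "neumann r g x = (\<Sum>\<^sub>\<infinity>n. r^(n+1) * (transition ^^ n) g x)"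

context
  fixes r :: real and g :: "'a \<Rightarrow> real"
  assumes r: "0 < r" "r < 1" and g: "in_L2 g"
begin

lemma neumann_square_summable: "(\<lambda>n. r^(n+1) * ((transition ^^ n) g x)^2) summable_on UNIV"
proof (rule summable_on_comparison_test)
  show "(\<lambda>n. r^(n+1) * (sqnorm g / \<pi> x)) summable_on UNIV"
    by (rule has_sum_imp_summable[OF has_sum_cmult_left[OF geometric_has_sum[OF r]]])
  show "r^(n+1) * ((transition ^^ n) g x)^2 \<le> r^(n+1) * (sqnorm g / \<pi> x)" for n
    using transition_iterate_square_le[OF g] r by (intro mult_left_mono) auto
qed (use r in simp)

lemma pi_mult_neumann_square_le:
  "\<pi> x * (neumann r g x)^2 \<le> r / (1 - r) * (\<Sum>\<^sub>\<infinity>n. r^(n+1) * (\<pi> x * ((transition ^^ n) g x)^2))"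
proof -
  have "\<pi> x * (neumann r g x)^2
      \<le> \<pi> x * (r / (1 - r) * (\<Sum>\<^sub>\<infinity>n. r^(n+1) * ((transition ^^ n) g x)^2))"
    using infsum_weighted_square_le(2)[OF _ geometric_has_sum[OF r] neumann_square_summable] r
      pi_pos[of x]
    unfolding neumann_def by (intro mult_left_mono) auto
  then show ?thesis
    unfolding infsum_cmult_right'[symmetric] by (simp add: algebra_simps)
qed

lemma neumann_in_L2:
  shows "in_L2 (neumann r g)" and "sqnorm (neumann r g) \<le> (r / (1 - r))^2 * sqnorm g"
proof -
  define W where "W = r / (1 - r)"
  have "0 < W" unfolding W_def using r by simp
  define D where "D x n = r^(n+1) * (\<pi> x * ((transition ^^ n) g x)^2)" for x n
  define s where "s n = r^(n+1) * sqnorm ((transition ^^ n) g)" for n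
  have columns: "((\<lambda>x. D x n) has_sum s n) UNIV" for n
    unfolding D_def s_def sqnorm_def
    by (intro has_sum_cmult_right has_sum_infsum)
      (use transition_iterate_in_L2(1)[OF g] in \<open>simp add: in_L2_def\<close>)
  have s_le: "s n \<le> r^(n+1) * sqnorm g" for n
    unfolding s_def using transition_iterate_in_L2(2)[OF g] r by (intro mult_left_mono) auto
  have geometric: "((\<lambda>n. r^(n+1) * sqnorm g) has_sum W * sqnorm g) UNIV"
    unfolding W_def by (rule has_sum_cmult_left[OF geometric_has_sum[OF r]])
  have "s summable_on UNIV"
    by (rule summable_on_comparison_test[OF has_sum_imp_summable[OF geometric] s_le])
      (use r sqnorm_nonneg in \<open>simp add: s_def\<close>)
  then have bound: "((\<lambda>x. W * (\<Sum>\<^sub>\<infinity>n. D x n)) has_sum W * (\<Sum>\<^sub>\<infinity>n. s n)) UNIV"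
    using has_sum_cmult_right[OF has_sum_iterated_nonneg(1)[OF _ columns]]
    by (simp add: D_def r less_imp_le pi_pos)
  have pointwise: "\<pi> x * (neumann r g x)^2 \<le> W * (\<Sum>\<^sub>\<infinity>n. D x n)" for x
    unfolding W_def D_def by (rule pi_mult_neumann_square_le)
  show L2: "in_L2 (neumann r g)"
    unfolding in_L2_def
    by (rule summable_on_comparison_test[OF has_sum_imp_summable[OF bound] pointwise])
      (simp add: pi_pos less_imp_le)
  have "sqnorm (neumann r g) \<le> W * (\<Sum>\<^sub>\<infinity>n. s n)"
    unfolding sqnorm_def infsumI[OF bound, symmetric]
    by (rule infsum_mono[OF L2[unfolded in_L2_def] has_sum_imp_summable[OF bound] pointwise])
  also have "\<dots> \<le> W * (W * sqnorm g)"
    using infsum_mono[OF \<open>s summable_on UNIV\<close> has_sum_imp_summable[OF geometric] s_le]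
      infsumI[OF geometric] \<open>0 < W\<close> by (intro mult_left_mono) auto
  finally show "sqnorm (neumann r g) \<le> (r / (1 - r))^2 * sqnorm g"
    unfolding W_def by (simp add: power2_eq_square)
qed

lemma neumann_transition_summable:
  "(\<lambda>(y, n). P x y * (r^(n+1) * (transition ^^ n) g y)) summable_on UNIV \<times> UNIV"
proof -
  define E where "E y n = r^(n+1) * (P x y * \<bar>(transition ^^ n) g y\<bar>)" for y n
  define s where "s n = r^(n+1) * (\<Sum>\<^sub>\<infinity>y. P x y * \<bar>(transition ^^ n) g y\<bar>)" for n
  have columns: "((\<lambda>y. E y n) has_sum s n) UNIV" for n
    unfolding E_def s_def
    by (intro has_sum_cmult_right has_sum_infsum transition_abs_le(1)
        transition_iterate_in_L2(1)[OF g])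
  have s_le: "s n \<le> r^(n+1) * sqrt (sqnorm g / \<pi> x)" for n
  proof -
    have "(\<Sum>\<^sub>\<infinity>y. P x y * \<bar>(transition ^^ n) g y\<bar>) \<le> sqrt (sqnorm ((transition ^^ n) g) / \<pi> x)"
      by (rule transition_abs_le(2)[OF transition_iterate_in_L2(1)[OF g]])
    also have "\<dots> \<le> sqrt (sqnorm g / \<pi> x)"
      using transition_iterate_in_L2(2)[OF g] pi_pos[of x] by (simp add: divide_right_mono)
    finally show ?thesis
      unfolding s_def using r by (intro mult_left_mono) auto
  qed
  have "s summable_on UNIV"
  proof (rule summable_on_comparison_test[OF _ s_le])
    show "(\<lambda>n. r^(n+1) * sqrt (sqnorm g / \<pi> x)) summable_on UNIV"
      by (rule has_sum_imp_summable[OF has_sum_cmult_left[OF geometric_has_sum[OF r]]])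
    show "0 \<le> s n" for n
      unfolding s_def using r by (intro mult_nonneg_nonneg infsum_nonneg) (auto simp: P_nonneg)
  qed
  moreover have "0 \<le> E y n" for y n
    unfolding E_def using r P_nonneg by simp
  ultimately show ?thesis
  proof (intro summable_on_abs_comparison_real[OF has_sum_iterated_nonneg(3)[OF _ columns]])
    fix p :: "'a \<times> nat"
    show "\<bar>(\<lambda>(y, n). P x y * (r^(n+1) * (transition ^^ n) g y)) p\<bar> \<le> (\<lambda>(y, n). E y n) p"
      unfolding E_def using r P_nonneg by (cases p) (simp add: abs_mult)
  qed
qed

lemma transition_neumann:
  "transition (neumann r g) x = (\<Sum>\<^sub>\<infinity>n. r^(n+1) * (transition ^^ Suc n) g x)"
proof -
  define E where "E y n = P x y * (r^(n+1) * (transition ^^ n) g y)" for y n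
  have "(\<Sum>\<^sub>\<infinity>y. \<Sum>\<^sub>\<infinity>n. E y n) = (\<Sum>\<^sub>\<infinity>n. \<Sum>\<^sub>\<infinity>y. E y n)"
    using neumann_transition_summable unfolding E_def by (rule infsum_swap_banach)
  moreover have "(\<Sum>\<^sub>\<infinity>n. E y n) = P x y * neumann r g y" for y
    unfolding E_def neumann_def by (rule infsum_cmult_right')
  moreover have "(\<Sum>\<^sub>\<infinity>y. E y n) = r^(n+1) * (transition ^^ Suc n) g x" for n
  proof -
    have "(\<Sum>\<^sub>\<infinity>y. E y n) = (\<Sum>\<^sub>\<infinity>y. r^(n+1) * (P x y * (transition ^^ n) g y))"
      by (simp only: E_def mult.left_commute)
    also have "\<dots> = r^(n+1) * transition ((transition ^^ n) g) x"
      unfolding transition_def[of "(transition ^^ n) g"] by (rule infsum_cmult_right')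
    finally show ?thesis by simp
  qed
  ultimately show ?thesis
    unfolding transition_def by simp
qed

lemma neumann_fixpoint: "neumann r g x = r * g x + r * transition (neumann r g) x"
proof -
  define b where "b n = r^(n+1) * (transition ^^ Suc n) g x" for n
  have "b summable_on UNIV"
  proof (rule summable_on_abs_comparison_real)
    show "(\<lambda>n. r^(n+1) * sqrt (sqnorm g / \<pi> x)) summable_on UNIV"
      by (rule has_sum_imp_summable[OF has_sum_cmult_left[OF geometric_has_sum[OF r]]])
    have "\<bar>(transition ^^ Suc n) g x\<bar> \<le> sqrt (sqnorm g / \<pi> x)" for n
      using transition_iterate_square_le[OF g] by (intro real_le_rsqrt) (simp only: power2_abs)
    then show "\<bar>b n\<bar> \<le> r^(n+1) * sqrt (sqnorm g / \<pi> x)" for n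
      unfolding b_def using r by (simp add: abs_mult mult_left_mono)
  qed
  define a where "a n = r^(n+1) * (transition ^^ n) g x" for n
  have "((\<lambda>n. r * b n) has_sum r * (\<Sum>\<^sub>\<infinity>n. b n)) UNIV"
    by (rule has_sum_cmult_right[OF has_sum_infsum[OF \<open>b summable_on UNIV\<close>]])
  moreover have "r * b n = a (Suc n)" for n
    unfolding a_def b_def by simp
  ultimately have "(a has_sum (a 0 + r * (\<Sum>\<^sub>\<infinity>n. b n))) UNIV"
    by (intro has_sum_Suc_shift) simp
  moreover have "neumann r g x = (\<Sum>\<^sub>\<infinity>n. a n)" "transition (neumann r g) x = (\<Sum>\<^sub>\<infinity>n. b n)"
    by (simp_all only: neumann_def a_def b_def transition_neumann)
  moreover have "a 0 = r * g x"
    unfolding a_def by simp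
  ultimately show ?thesis
    by (simp add: infsumI)
qed

end

lemma neumann_right_inverse:
  assumes "t < 0" and "in_L2 g"
  shows "(1 - t) * neumann (1 / (1 - t)) g x - transition (neumann (1 / (1 - t)) g) x = g x"
proof -
  have "neumann (1 / (1 - t)) g x
      = (g x + transition (neumann (1 / (1 - t)) g) x) / (1 - t)"
    using neumann_fixpoint[of "1 / (1 - t)" g x] assms by (simp add: add_divide_distrib)
  then show ?thesis
    using assms by (simp add: field_simps)
qed

lemma sqnorm_neumann_le:
  assumes "t < 0" and "in_L2 g"
  shows "sqnorm (neumann (1 / (1 - t)) g) \<le> (1 / t)^2 * sqnorm g"
proof -
  have "(1 / (1 - t)) / (1 - 1 / (1 - t)) = - (1 / t)"
    using assms by (simp add: field_simps)
  then show ?thesis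
    using neumann_in_L2(2)[of "1 / (1 - t)" g] assms by simp
qed

lemma transition_eigenfunction_eq_0:
  assumes "t < 0" and "in_L2 v" and eigen: "\<And>x. transition v x = (1 - t) * v x"
  shows "v x = 0"
proof -
  have "transition v = (\<lambda>x. (1 - t) * v x)"
    using eigen by auto
  then have "(1 - t)^2 * sqnorm v \<le> 1 * sqnorm v"
    using transition_in_L2(2)[OF \<open>in_L2 v\<close>] by (simp add: sqnorm_scale)
  moreover have "1 < (1 - t)^2"
    using \<open>t < 0\<close> by (simp add: power2_eq_square) (smt (verit) mult_less_cancel_left1)
  ultimately have "((1 - t)^2 - 1) * sqnorm v \<le> 0" "0 < (1 - t)^2 - 1"
    by (simp_all add: left_diff_distrib)
  then have "sqnorm v = 0"
    using sqnorm_nonneg[of v] by (simp add: mult_le_0_iff)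
  then show ?thesis
    by (rule in_L2_sqnorm_eq_0[OF \<open>in_L2 v\<close>])
qed

lemma neumann_left_inverse:
  assumes "t < 0" and "in_L2 g"
  shows "neumann (1 / (1 - t)) (\<lambda>x. rlap g x - t * g x) x = g x"
proof -
  define u where "u = neumann (1 / (1 - t)) (\<lambda>x. rlap g x - t * g x)"
  have "in_L2 (\<lambda>x. rlap g x - t * g x)"
    using assms by (intro in_L2_diff rlap_in_L2)
  then have "in_L2 u" and u: "\<And>x. (1 - t) * u x - transition u x = rlap g x - t * g x"
    unfolding u_def using assms neumann_in_L2(1) neumann_right_inverse by auto
  have "transition (\<lambda>x. u x - 1 * g x) x = (1 - t) * (u x - 1 * g x)" for x
    using transition_diff[OF \<open>in_L2 u\<close> \<open>in_L2 g\<close>, of 1 x] u[of x]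
    unfolding rlap_def by (simp add: algebra_simps)
  then have "u x - 1 * g x = 0"
    by (rule transition_eigenfunction_eq_0[OF assms(1) in_L2_diff[OF \<open>in_L2 u\<close> \<open>in_L2 g\<close>]])
  then show ?thesis
    unfolding u_def by simp
qed

definition neumann_resolvent :: "real \<Rightarrow> ('a \<Rightarrow> complex) \<Rightarrow> 'a \<Rightarrow> complex" where
  "neumann_resolvent t f x = complex_of_real (neumann (1 / (1 - t)) (\<lambda>y. Re (f y)) x)
     + \<i> * complex_of_real (neumann (1 / (1 - t)) (\<lambda>y. Im (f y)) x)"

lemma Re_neumann_resolvent: "(\<lambda>x. Re (neumann_resolvent t f x)) = neumann (1 / (1 - t)
  ) (\<lambda>y. Re (f y))"
  and Im_neumann_resolvent: "(\<lambda>x. Im (neumann_resolvent t f x)) = neumann (1 / (1 - t)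
    ) (\<lambda>y. Im (f y))"
  unfolding neumann_resolvent_def by auto

lemma neumann_resolvent_bounded:
  assumes "t < 0" and "f \<in> l2 c"
  shows "neumann_resolvent t f \<in> l2 c"
    and "l2norm c (neumann_resolvent t f) \<le> (1 / - t) * l2norm c f"
proof -
  show l2: "neumann_resolvent t f \<in> l2 c"
    using assms neumann_in_L2(1)[of "1 / (1 - t)"]
    unfolding in_l2_iff Re_neumann_resolvent Im_neumann_resolvent by simp
  have "l2norm c (neumann_resolvent t f)
      = sqrt (sqnorm (neumann (1 / (1 - t)) (\<lambda>y. Re (f y))) + sqnorm (neumann (1 / (1 - t)
        ) (\<lambda>y. Im (f y))))"
    using l2norm_eq[OF l2] unfolding Re_neumann_resolvent Im_neumann_resolvent .
  also have "\<dots> \<le> sqrt ((1 / t)^2 * (sqnorm (\<lambda>y. Re (f y)) + sqnorm (\<lambda>y. Im (f y))))"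
    using assms sqnorm_neumann_le[OF assms(1)] unfolding in_l2_iff
    by (simp add: distrib_left add_mono)
  also have "\<dots> = (1 / - t) * l2norm c f"
    using l2norm_eq[OF assms(2)] assms(1) by (simp add: real_sqrt_mult)
  finally show "l2norm c (neumann_resolvent t f) \<le> (1 / - t) * l2norm c f" .
qed

lemma neumann_resolvent_left_inverse:
  assumes "t < 0" and "f \<in> l2 c"
  shows "neumann_resolvent t (\<lambda>x. lap c f x - complex_of_real t * f x) = f"
proof -
  have "(\<lambda>y. Re (lap c f y - complex_of_real t * f y)) = (\<lambda>y. rlap (\<lambda>y. Re (f y)) y - t * Re (f y))"
    "(\<lambda>y. Im (lap c f y - complex_of_real t * f y)) = (\<lambda>y. rlap (\<lambda>y. Im (f y)) y - t * Im (f y))"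
    using lap_eq[OF assms(2)] by simp_all
  then show ?thesis
    using assms neumann_left_inverse[OF assms(1)] unfolding in_l2_iff
    by (auto simp: neumann_resolvent_def complex_eq_iff)
qed

lemma neumann_resolvent_right_inverse:
  assumes "t < 0" and "f \<in> l2 c"
  shows "(\<lambda>x. lap c (neumann_resolvent t f) x - complex_of_real t * neumann_resolvent t f x) = f"
proof
  fix x
  have "(1 - t) * neumann (1 / (1 - t)) (\<lambda>y. Re (f y)) x
        - transition (neumann (1 / (1 - t)) (\<lambda>y. Re (f y))) x = Re (f x)"
    "(1 - t) * neumann (1 / (1 - t)) (\<lambda>y. Im (f y)) x
        - transition (neumann (1 / (1 - t)) (\<lambda>y. Im (f y))) x = Im (f x)"
    using assms neumann_right_inverse[OF assms(1)] unfolding in_l2_iff by auto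
  then show "lap c (neumann_resolvent t f) x - complex_of_real t * neumann_resolvent t f x = f x"
    unfolding lap_eq[OF neumann_resolvent_bounded(1)[OF assms]]
      Re_neumann_resolvent Im_neumann_resolvent
    by (simp add: neumann_resolvent_def rlap_def complex_eq_iff algebra_simps)
qed

lemma negative_in_resolvent_set: "t < 0 \<Longrightarrow> complex_of_real t \<in> resolvent_set c"
  unfolding resolvent_set_def
  using neumann_resolvent_bounded neumann_resolvent_left_inverse neumann_resolvent_right_inverse
  by blast

lemma lambda_min_nonneg: "0 \<le> lambda_min c"
  and lambda_min_le_Inf_rayleigh: "lambda_min c \<le> Inf rayleigh_quotients"
proof -
  define \<Sigma> where "\<Sigma> = {t::real. complex_of_real t \<in> lap_spectrum c}"
  have "Inf rayleigh_quotients \<in> \<Sigma>"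
    unfolding \<Sigma>_def lap_spectrum_def using Inf_rayleigh_not_in_resolvent_set by simp
  moreover have nonneg: "0 \<le> t" if "t \<in> \<Sigma>" for t
  proof (rule ccontr)
    assume "\<not> 0 \<le> t"
    then show False
      using that negative_in_resolvent_set[of t] unfolding \<Sigma>_def lap_spectrum_def by simp
  qed
  moreover have "bdd_below \<Sigma>"
    using nonneg by (rule bdd_belowI)
  ultimately show "0 \<le> lambda_min c" "lambda_min c \<le> Inf rayleigh_quotients"
    unfolding lambda_min_def \<Sigma>_def[symmetric] by (auto intro: cInf_greatest cInf_lower)
qed

end

section \<open>Dirichlet eigenvalues\<close>

lemma eigenvector_of_char_poly_root:
  fixes M :: "real mat"
  assumes "M \<in> carrier_mat n n" and "char_poly M = (\<Prod>i\<in>{1..n}. [:- lam i, 1:])"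
    and "1 \<le> i" and "i \<le> n"
  obtains v where "v \<in> carrier_vec n" "v \<noteq> 0\<^sub>v n" "M *\<^sub>v v = lam i \<cdot>\<^sub>v v"
proof -
  have "(\<Prod>j\<in>{1..n}. lam i - lam j) = 0"
    by (rule prod_zero) (use assms in auto)
  then have "poly (char_poly M) (lam i) = 0"
    using assms(2) by (simp add: poly_prod)
  then have "eigenvalue M (lam i)"
    using eigenvalue_root_char_poly[OF assms(1)] by simp
  then show ?thesis
    using that assms(1) unfolding eigenvalue_def eigenvector_def by blast
qed

lemma det_2x2:
  fixes A :: "'a::comm_ring_1 mat"
  assumes A: "A \<in> carrier_mat 2 2"
  shows "det A = A $$ (0, 0) * A $$ (1, 1) - A $$ (0, 1) * A $$ (1, 0)"
proof -
  have A': "A \<in> carrier_mat (Suc 1) (Suc 1)" using A by (simp add: numeral_2_eq_2)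
  have minor: "mat_delete A 0 j \<in> carrier_mat 1 1" for j
    using mat_delete_carrier[OF A] by simp
  have cofactors: "cofactor A 0 0 = A $$ (1, 1)" "cofactor A 0 1 = - A $$ (1, 0)"
    using mat_delete_index[OF A', of 0 0 0 0] mat_delete_index[OF A', of 0 1 0 0]
    unfolding cofactor_def det_single[OF minor] by (simp_all add: insert_index_def)
  have "det A = (\<Sum>j<2. A $$ (0, j) * cofactor A 0 j)"
    by (rule laplace_expansion_row[OF A]) simp
  also have "\<dots> = A $$ (0, 0) * cofactor A 0 0 + A $$ (0, 1) * cofactor A 0 1"
    by (simp add: numeral_2_eq_2)
  also have "\<dots> = A $$ (0, 0) * A $$ (1, 1) - A $$ (0, 1) * A $$ (1, 0)"
    unfolding cofactors by simp
  finally show ?thesis .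
qed

context network_space
begin

lemma rlap_eq_dirichlet_matrix:
  fixes v :: "real Matrix.vec"
  assumes "finite \<Omega>" and "bij_betw e {0..<n} \<Omega>" and "v \<in> carrier_vec n"
    and outside: "\<And>x. x \<notin> \<Omega> \<Longrightarrow> g x = 0" and inside: "\<And>j. j < n \<Longrightarrow> g (e j) = v $ j"
    and "j < n"
  shows "rlap g (e j) = (mat n n (\<lambda>(i, k). (if i = k then 1 else 0) - P (e i) (e k)) *\<^sub>v v) $ j"
proof -
  have "(mat n n (\<lambda>(i, k). (if i = k then 1 else 0) - P (e i) (e k)) *\<^sub>v v) $ j
      = (\<Sum>k<n. ((if j = k then 1 else 0) - P (e j) (e k)) * v $ k)"
    using assms(3,6) by (auto simp: scalar_prod_def lessThan_atLeast0 intro!: sum.cong)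
  also have "\<dots> = (\<Sum>k<n. (if j = k then v $ k else 0) - P (e j) (e k) * v $ k)"
    by (rule sum.cong) (auto simp: left_diff_distrib)
  also have "\<dots> = v $ j - (\<Sum>k<n. P (e j) (e k) * v $ k)"
    using \<open>j < n\<close> by (simp add: sum_subtractf)
  also have "\<dots> = rlap g (e j)"
    unfolding rlap_def transition_def
    using infsum_mult_finite_support_bij[where v = "\<lambda>k. v $ k", OF assms(1,2) outside inside]
      inside[OF \<open>j < n\<close>] by simp
  finally show ?thesis ..
qed

lemma dirichlet_eigenfunction:
  assumes "finite \<Omega>" and "dirichlet_eigenvalues c \<Omega> lam" and "1 \<le> i" and "i \<le> card \<Omega>"
  obtains g where "in_L2 g" "0 < sqnorm g" "pinner (rlap g) g = lam i * sqnorm g"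
proof -
  define n where "n = card \<Omega>"
  obtain e where bij: "bij_betw e {0..<n} \<Omega>" and
    cp: "char_poly (mat n n (\<lambda>(i, j). (if i = j then 1 else 0) - P (e i) (e j)))
        = (\<Prod>i\<in>{1..n}. [:- lam i, 1:])"
    using assms(2) unfolding dirichlet_eigenvalues_def n_def by blast
  obtain v where v: "v \<in> carrier_vec n" "v \<noteq> 0\<^sub>v n"
    and Mv: "mat n n (\<lambda>(i, j). (if i = j then 1 else 0) - P (e i) (e j)) *\<^sub>v v = lam i \<cdot>\<^sub>v v"
    by (rule eigenvector_of_char_poly_root[OF _ cp]) (use assms in \<open>simp_all add: n_def\<close>)
  define g where "g x = (if x \<in> \<Omega> then v $ the_inv_into {0..<n} e x else 0)" for x
  have inside: "g (e j) = v $ j" if "j < n" for j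
    using that bij unfolding g_def bij_betw_def by (auto simp: the_inv_into_f_f)
  have outside: "g x = 0" if "x \<notin> \<Omega>" for x
    using that unfolding g_def by simp
  note finite_sum =
    infsum_mult_finite_support_bij[where v = "\<lambda>k. v $ k", OF assms(1) bij outside inside]
  have "in_L2 g"
    unfolding in_L2_def using infsum_finite_support(1)[OF assms(1)] outside by simp
  have "sqnorm g = (\<Sum>j<n. \<pi> (e j) * g (e j) * v $ j)"
    using finite_sum[of "\<lambda>x. \<pi> x * g x"] unfolding sqnorm_def
    by (simp add: power2_eq_square mult.assoc)
  also have "\<dots> = (\<Sum>j<n. \<pi> (e j) * (v $ j)^2)"
    by (rule sum.cong) (simp_all add: inside power2_eq_square)
  finally have sqnorm_g: "sqnorm g = (\<Sum>j<n. \<pi> (e j) * (v $ j)^2)" .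
  obtain j where "j < n" "v $ j \<noteq> 0"
    using v by (metis eq_vecI carrier_vecD index_zero_vec(1,2))
  then have "0 < sqnorm g"
    unfolding sqnorm_g
    by (intro sum_pos2[of _ j])
      (auto intro: mult_nonneg_nonneg mult_pos_pos less_imp_le[OF pi_pos] pi_pos)
  have eigen: "rlap g (e j) = lam i * v $ j" if "j < n" for j
    using rlap_eq_dirichlet_matrix[OF assms(1) bij v(1) outside inside that] that v(1)
    unfolding Mv by simp
  have "pinner (rlap g) g = (\<Sum>j<n. \<pi> (e j) * rlap g (e j) * v $ j)"
    unfolding pinner_def using finite_sum[of "\<lambda>x. \<pi> x * rlap g x"] by (simp add: mult.assoc)
  also have "\<dots> = lam i * sqnorm g"
    unfolding sqnorm_g sum_distrib_left by (rule sum.cong) (simp_all add: eigen power2_eq_square)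
  finally show ?thesis
    using that \<open>in_L2 g\<close> \<open>0 < sqnorm g\<close> by blast
qed

lemma lambda_min_le_dirichlet_eigenvalue:
  assumes "finite \<Omega>" and "dirichlet_eigenvalues c \<Omega> lam" and "1 \<le> i" and "i \<le> card \<Omega>"
  shows "lambda_min c \<le> lam i"
proof -
  obtain g where "in_L2 g" "0 < sqnorm g" "pinner (rlap g) g = lam i * sqnorm g"
    by (rule dirichlet_eigenfunction[OF assms])
  then have "lam i \<in> rayleigh_quotients"
    unfolding rayleigh_quotients_def by (intro CollectI exI[of _ g]) simp
  then have "Inf rayleigh_quotients \<le> lam i"
    by (rule cInf_lower) (use rayleigh_quotients_nonneg in \<open>rule bdd_belowI\<close>)
  then show ?thesis
    using lambda_min_le_Inf_rayleigh by simp
qed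

lemma two_point_dirichlet_eigenvalues:
  assumes "x \<noteq> y"
  defines "T \<equiv> 2 - P x x - P y y" and "s \<equiv> sqrt ((P x x - P y y)^2 + 4 * P x y * P y x)"
  obtains lam where "dirichlet_eigenvalues c {x, y} lam"
    and "lam 1 = (T - s) / 2" and "lam 2 = (T + s) / 2"
proof -
  define l1 where "l1 = (T - s) / 2"
  define l2 where "l2 = (T + s) / 2"
  define lam where "lam i = (if i = 1 then l1 else l2)" for i :: nat
  define e where "e i = (if i = 0 then x else y)" for i :: nat
  define M where "M = mat 2 2 (\<lambda>(i, j). (if i = j then 1 else 0) - P (e i) (e j))"
  have "s^2 = (P x x - P y y)^2 + 4 * P x y * P y x"
    unfolding s_def using P_nonneg[of x y] P_nonneg[of y x] by simp
  then have "l1 * l2 = (1 - P x x) * (1 - P y y) - P x y * P y x" "l1 + l2 = 2 - P x x - P y y"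
    unfolding l1_def l2_def T_def by (simp_all add: field_simps power2_eq_square)
  then have "char_poly M = [:- l1, 1:] * [:- l2, 1:]"
    unfolding char_poly_def char_poly_matrix_def M_def
    by (subst det_2x2) (auto simp: e_def assms(1) algebra_simps
        intro!: poly_eqI simp: coeff_mult numeral_2_eq_2)
  moreover have "(\<Prod>i\<in>{1..2::nat}. [:- lam i, 1:]) = [:- l1, 1:] * [:- l2, 1:]"
    unfolding lam_def by (simp add: numeral_2_eq_2 atLeastAtMostSuc_conv)
  ultimately have "char_poly M = (\<Prod>i\<in>{1..2::nat}. [:- lam i, 1:])"
    by simp
  moreover have "bij_betw e {0..<2} {x, y}"
    unfolding bij_betw_def e_def using assms(1)
    by (auto simp: numeral_2_eq_2 atLeast0LessThan lessThan_Suc)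
  moreover have "l1 \<le> l2"
    unfolding l1_def l2_def s_def using P_nonneg[of x y] P_nonneg[of y x] by simp
  moreover have "card {x, y} = 2"
    using assms(1) by simp
  ultimately have "dirichlet_eigenvalues c {x, y} lam"
    unfolding dirichlet_eigenvalues_def M_def by (auto simp: lam_def)
  then show ?thesis
    using that unfolding lam_def l1_def l2_def by simp
qed

text \<open>On a two-point set the Yang-type inequality for \<open>k = 1\<close> has a positive left side unless
  the two Dirichlet eigenvalues coincide, which happens only if \<open>P x y * P y x = 0\<close>.\<close>

lemma yang_type_negative_imp_no_edges:
  assumes "yang_type c C" and "C < 0" and "x \<noteq> y"
  shows "c x y = 0"
proof -
  define s where "s = sqrt ((P x x - P y y)^2 + 4 * P x y * P y x)"
  obtain lam where eig: "dirichlet_eigenvalues c {x, y} lam"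
    and lam1: "lam 1 = (2 - P x x - P y y - s) / 2" and lam2: "lam 2 = (2 - P x x - P y y + s) / 2"
    using two_point_dirichlet_eigenvalues[OF \<open>x \<noteq> y\<close>] unfolding s_def by blast
  have "card {x, y} = 2" using \<open>x \<noteq> y\<close> by simp
  then have "lambda_min c \<le> lam 1"
    by (intro lambda_min_le_dirichlet_eigenvalue[OF _ eig]) simp_all
  have "lam 2 - lam 1 = s"
    unfolding lam1 lam2 by (simp add: field_simps)
  have "lam 1 \<le> 1 - s / 2"
    unfolding lam1 using P_nonneg[of x x] P_nonneg[of y y] by simp
  have "s^2 * (1 - lam 1) \<le> C * (s * (lam 1 - lambda_min c))"
    using assms(1)[unfolded yang_type_def, rule_format, of "{x, y}" lam 1] eig \<open>card {x, y} = 2\<close>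
      \<open>lam 2 - lam 1 = s\<close> by (simp add: numeral_2_eq_2)
  moreover have "0 \<le> s"
    unfolding s_def using P_nonneg[of x y] P_nonneg[of y x] by simp
  moreover have "C * (s * (lam 1 - lambda_min c)) \<le> 0"
    using \<open>C < 0\<close> \<open>0 \<le> s\<close> \<open>lambda_min c \<le> lam 1\<close> by (simp add: mult_nonpos_nonneg)
  ultimately have "s^2 * (1 - lam 1) \<le> 0"
    by linarith
  have "s = 0"
  proof (rule ccontr)
    assume "s \<noteq> 0"
    with \<open>0 \<le> s\<close> \<open>lam 1 \<le> 1 - s / 2\<close> have "0 < s^2" "0 < 1 - lam 1"
      by simp_all
    then show False
      using \<open>s^2 * (1 - lam 1) \<le> 0\<close> by (simp add: mult_le_0_iff)
  qed
  then have "(P x x - P y y)^2 + 4 * P x y * P y x = 0"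
    unfolding s_def using P_nonneg[of x y] P_nonneg[of y x] by simp
  moreover have "0 \<le> P x y * P y x"
    using P_nonneg[of x y] P_nonneg[of y x] by simp
  ultimately have "P x y * P y x = 0"
    using zero_le_power2[of "P x x - P y y"] by linarith
  then show ?thesis
    unfolding trans_P_def using pi_pos[of x] pi_pos[of y] conductance_sym[of x y] by auto
qed

lemma rlap_no_edges:
  assumes "\<And>x y. x \<noteq> y \<Longrightarrow> c x y = 0"
  shows "rlap g x = 0"
proof -
  have "\<pi> x = c x x"
    using infsum_finite_support(2)[of "{x}" "c x"] assms unfolding pi_w_def by simp
  then have "P x x = 1"
    unfolding trans_P_def using pi_pos[of x] by simp
  moreover have "transition g x = P x x * g x"
    unfolding transition_def using infsum_finite_support(2)[of "{x}"] assms
    by (simp add: trans_P_def)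
  ultimately show ?thesis
    unfolding rlap_def by simp
qed

lemma dirichlet_eigenvalue_no_edges:
  assumes "\<And>x y. x \<noteq> y \<Longrightarrow> c x y = 0"
    and "finite \<Omega>" and "dirichlet_eigenvalues c \<Omega> lam" and "1 \<le> i" and "i \<le> card \<Omega>"
  shows "lam i = 0"
proof -
  obtain g where "0 < sqnorm g" "pinner (rlap g) g = lam i * sqnorm g"
    by (rule dirichlet_eigenfunction[OF assms(2-5)])
  moreover have "pinner (rlap g) g = 0"
    unfolding pinner_def by (simp add: rlap_no_edges[OF assms(1)])
  ultimately show ?thesis
    by simp
qed

end

lemma yang_type_gap_ineq:
  assumes "yang_type c C" and "finite \<Omega>" and "dirichlet_eigenvalues c \<Omega> lam"
    and "k < card \<Omega>" and "0 < \<delta>" and "lam k \<le> 1 - \<delta>" and "1 \<le> j" and "j \<le> k"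
  shows "(\<Sum>i=1..j. (lam (j+1) - lam i)^2)
           \<le> C / \<delta> * (\<Sum>i=1..j. (lam (j+1) - lam i) * (lam i - lambda_min c))"
proof -
  have "\<delta> * (\<Sum>i=1..j. (lam (j+1) - lam i)^2) = (\<Sum>i=1..j. (lam (j+1) - lam i)^2 * \<delta>)"
    by (simp add: sum_distrib_left mult.commute)
  also have "\<dots> \<le> (\<Sum>i=1..j. (lam (j+1) - lam i)^2 * (1 - lam i))"
  proof (rule sum_mono)
    fix i assume "i \<in> {1..j}"
    then have "lam i \<le> lam k"
      using assms(3,4,8) unfolding dirichlet_eigenvalues_def by auto
    then show "(lam (j+1) - lam i)^2 * \<delta> \<le> (lam (j+1) - lam i)^2 * (1 - lam i)"
      using assms(6) by (intro mult_left_mono) auto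
  qed
  also have "\<dots> \<le> C * (\<Sum>i=1..j. (lam (j+1) - lam i) * (lam i - lambda_min c))"
    using assms(1-4,8) unfolding yang_type_def by simp
  finally show ?thesis
    using \<open>0 < \<delta>\<close> by (simp add: pos_le_divide_eq mult.commute)
qed

theorem corollary5p6:
  fixes c :: "'a::countable \<Rightarrow> 'a \<Rightarrow> real" and C :: real and \<Omega> :: "'a set"
    and lam :: "nat \<Rightarrow> real" and k :: nat and \<delta> :: real
  assumes "network c" and "yang_type c C"
    and "finite \<Omega>" and "dirichlet_eigenvalues c \<Omega> lam"
    and "1 \<le> k" and "k < card \<Omega>"
    and "\<delta> > 0" and "lam k \<le> 1 - \<delta>"
  shows "lam (k+1) - lambda_min c
           \<le> (1 + C / \<delta>) * (real k) powr (C / \<delta> / 2) * (lam 1 - lambda_min c)"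
proof -
  interpret network_space c by unfold_locales (rule assms(1))
  have "lambda_min c \<le> lam 1"
    using lambda_min_le_dirichlet_eigenvalue assms(3-6) by simp
  show ?thesis
  proof (cases "C < 0")
    case True
    then have "lam 1 = 0" "lam (k+1) = 0"
      using dirichlet_eigenvalue_no_edges[OF yang_type_negative_imp_no_edges[OF assms(2)]]
        assms(3-6)
      by simp_all
    then show ?thesis
      using lambda_min_nonneg \<open>lambda_min c \<le> lam 1\<close> by simp
  next
    case False
    define \<mu> where "\<mu> i = lam i - lambda_min c" for i
    have "\<mu> (k+1) \<le> (1 + 2 * (C / \<delta> / 2)) * real k powr (C / \<delta> / 2) * \<mu> 1"
    proof (rule cheng_yang_recursion)
      show "(\<Sum>i=1..j. (\<mu> (j+1) - \<mu> i)^2) \<le> 2 * (C / \<delta> / 2) * (\<Sum>i=1..j. (\<mu> (j+1) - \<mu> i) * \<mu> i)"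
        if "1 \<le> j" "j \<le> k" for j
        using yang_type_gap_ineq[OF assms(2-4,6,7,8) that] unfolding \<mu>_def by simp
    qed (use False assms(5,7) \<open>lambda_min c \<le> lam 1\<close> in \<open>simp_all add: \<mu>_def\<close>)
    then show ?thesis
      unfolding \<mu>_def by simp
  qed
qed

end
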